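(* Let Assumption 1 hold. For every real $c_1,\dots,c_n$, every initial state $x_0=x(0)\in\mathbb{R}^n$ of the plant and every locally integrable input $u(\cdot)$, the state $\chi(t)=\mathrm{col}(\zeta(t),\mu(t))\in\mathbb{R}^{2n}$ of the filters satisfies, for all $t\ge 0$, \[\dot\chi(t)=A_{\mathrm f}\chi(t)+B_{\mathrm f}u(t)+G_{\mathrm f}\,\mathrm{e}^{A_{\mathrm r}^\top t}x_0 ,\] and the pair $(A_{\mathrm f},B_{\mathrm f})$ is reachable.
   Context: Fix $n\ge 1$ and real numbers $a_1,\dots,a_n,b_1,\dots,b_n$. The plant is the continuous-time SISO system $y^{(n)}+a_1y^{(n-1)}+\dots+a_ny=b_1u^{(n-1)}+\dots+b_nu$, represented in observability canonical form $\dot x=Ax+Bu$, $y=Cx$, $x(t)\in\mathbb{R}^n$, where $C=[0_{1,n-1}\;1]$, $A$ is the $n\times n$ matrix whose first $n-1$ columns are $\begin{bmatrix}0_{1,n-1}\\ I_{n-1}\end{bmatrix}$ and whose last column is $(-a_n,\dots,-a_1)^\top$, and $B=(b_n,\dots,b_1)^\top$. Assumption 1: the polynomials $s^n+a_1s^{n-1}+\dots+a_n$ and $b_1s^{n-1}+\dots+b_n$ are coprime (no common complex root). For real parameters $c_1,\dots,c_n$, $A_{\mathrm r}\in\mathbb{R}^{n\times n}$ is the matrix whose first $n-1$ rows are $[0_{n-1,1}\;I_{n-1}]$ and whose last row is $(-c_n,\dots,-c_1)$, and $B_{\mathrm r}=(0,\dots,0,1)^\top\in\mathbb{R}^n$.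 The filters are $\dot\zeta=A_{\mathrm r}\zeta+B_{\mathrm r}u$, $\zeta(0)=0$, and $\dot\mu=A_{\mathrm r}\mu+B_{\mathrm r}y$, $\mu(0)=0$, with $\chi=\mathrm{col}(\zeta,\mu)$. Define $A_{\mathrm f}=\begin{bmatrix}A_{\mathrm r}&0_{n,n}\\ L_b& A_a\end{bmatrix}\in\mathbb{R}^{2n\times 2n}$, where $L_b\in\mathbb{R}^{n\times n}$ has all rows zero except the last, which equals $(b_n,\dots,b_1)$, and $A_a\in\mathbb{R}^{n\times n}$ has first $n-1$ rows $[0_{n-1,1}\;I_{n-1}]$ and last row $(-a_n,\dots,-a_1)$; $B_{\mathrm f}=\mathrm{col}(0_{n-1,1},1,0_{n,1})\in\mathbb{R}^{2n}$; and $G_{\mathrm f}\in\mathbb{R}^{2n\times n}$ is the matrix whose only nonzero entry is a $1$ in position $(2n,n)$. *)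

theory Defs
  imports "HOL-Analysis.Analysis" "Jordan_Normal_Form.DL_Rank"
begin

text \<open>All matrices/vectors are Jordan_Normal_Form matrices/vectors, indexed from 0.
  The coefficient sequences a, b, c are indexed from 1 as in the paper (a 1, ..., a n).\<close>

definition A_obs :: "nat \<Rightarrow> (nat \<Rightarrow> real) \<Rightarrow> real mat" where
  "A_obs n a = mat n n (\<lambda>(i,j). if j = n - 1 then - a (n - i) else if i = j + 1 then 1 else 0)"

definition B_obs :: "nat \<Rightarrow> (nat \<Rightarrow> real) \<Rightarrow> real vec" where
  "B_obs n b = vec n (\<lambda>i. b (n - i))"

definition C_obs :: "nat \<Rightarrow> real vec" where
  "C_obs n = vec n (\<lambda>i. if i = n - 1 then 1 else 0)"

text \<open>Companion matrix with first n-1 rows [0 I] and last row (-c n, ..., -c 1):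
  this is A_r (with c) and A_a (with a).\<close>
definition comp_mat :: "nat \<Rightarrow> (nat \<Rightarrow> real) \<Rightarrow> real mat" where
  "comp_mat n c = mat n n (\<lambda>(i,j). if i = n - 1 then - c (n - j) else if j = i + 1 then 1 else 0)"

definition B_r :: "nat \<Rightarrow> real vec" where
  "B_r n = vec n (\<lambda>i. if i = n - 1 then 1 else 0)"

definition L_b :: "nat \<Rightarrow> (nat \<Rightarrow> real) \<Rightarrow> real mat" where
  "L_b n b = mat n n (\<lambda>(i,j). if i = n - 1 then b (n - j) else 0)"

definition A_f :: "nat \<Rightarrow> (nat \<Rightarrow> real) \<Rightarrow> (nat \<Rightarrow> real) \<Rightarrow> (nat \<Rightarrow> real) \<Rightarrow> real mat" where
  "A_f n a b c = four_block_mat (comp_mat n c) (0\<^sub>m n n) (L_b n b) (comp_mat n a)"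

definition B_f :: "nat \<Rightarrow> real vec" where
  "B_f n = vec (2 * n) (\<lambda>i. if i = n - 1 then 1 else 0)"

definition G_f :: "nat \<Rightarrow> real mat" where
  "G_f n = mat (2 * n) n (\<lambda>(i,j). if i = 2 * n - 1 \<and> j = n - 1 then 1 else 0)"

definition mat_exp :: "real mat \<Rightarrow> real \<Rightarrow> real mat" where
  "mat_exp M t = mat (dim_row M) (dim_col M)
     (\<lambda>(i,j). \<Sum>k. t ^ k / fact k * (M ^\<^sub>m k) $$ (i,j))"

text \<open>Solution (Caratheodory sense) on [0,\<infinity>) of z' = F(t), z(0) = z0, in R^m:
  each component is the indefinite (Lebesgue/Henstock) integral of the right-hand side.\<close>
definition is_solution :: "nat \<Rightarrow> (real \<Rightarrow> real vec) \<Rightarrow> (real \<Rightarrow> real vec) \<Rightarrow> real vec \<Rightarrow> bool" where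
  "is_solution m z F z0 \<longleftrightarrow> (\<forall>t. z t \<in> carrier_vec m) \<and> z 0 = z0 \<and>
     (\<forall>t\<ge>0. \<forall>i<m. ((\<lambda>s. F s $ i) has_integral (z t $ i - z0 $ i)) {0..t})"

definition reachable :: "nat \<Rightarrow> real mat \<Rightarrow> real vec \<Rightarrow> bool" where
  "reachable m A B \<longleftrightarrow>
     vec_space.rank m (mat m m (\<lambda>(i,j). ((A ^\<^sub>m j) *\<^sub>v B) $ i :: real)) = m"

definition assumption1 :: "nat \<Rightarrow> (nat \<Rightarrow> real) \<Rightarrow> (nat \<Rightarrow> real) \<Rightarrow> bool" where
  "assumption1 n a b \<longleftrightarrow> \<not> (\<exists>s::complex.
     s ^ n + (\<Sum>k=1..n. of_real (a k) * s ^ (n - k)) = 0 \<and>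
     (\<Sum>k=1..n. of_real (b k) * s ^ (n - k)) = 0)"

end

theory Submission
  imports Defs "HOL-Computational_Algebra.Fundamental_Theorem_Algebra"
    "HOL-Computational_Algebra.Polynomial_Factorial" "HOL-Computational_Algebra.Field_as_Ring"
begin

(*
  Let P_b and P_d be the Bezout matrices of c(s) with b(s) and with c(s) - a(s). They
  intertwine the companion matrix A_r with its transpose and map B_r to the coefficient
  vectors of b and c - a, so xi = x - P_b zeta - P_d mu solves xi' = A_r^T xi with
  xi(0) = x_0, i.e. xi(t) = exp(A_r^T t) x_0. Reading off the last component expresses the
  plant output through the filter states, y = b . zeta + (c - a) . mu + (exp(A_r^T t) x_0)_n,
  and substituting this into the output filter gives the second block row of A_f.

  For reachability, let sigma be the shift on sequences and E the impulse response of the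
  recurrence with characteristic polynomial a(s) c(s). The Kalman columns A_f^k B_f are the
  windows of length n of a(sigma) E and b(sigma) E starting at k. A vector in the kernel of the
  Kalman matrix gives a polynomial G of degree below 2n annihilating both windows at 0; this
  forces c | G and then, a and b being coprime, a c | G, so G = 0.
*)

section \<open>Matrix exponential and linear differential equations\<close>

lemma index_mult_mat_sum:
  "A \<in> carrier_mat n m \<Longrightarrow> B \<in> carrier_mat m p \<Longrightarrow> i < n \<Longrightarrow> j < p \<Longrightarrow>
    (A * B) $$ (i, j) = (\<Sum>l<m. A $$ (i, l) * B $$ (l, j))"
  by (auto simp: scalar_prod_def atLeast0LessThan)

lemma index_mult_mat_vec_sum:
  "M \<in> carrier_mat n m \<Longrightarrow> v \<in> carrier_vec m \<Longrightarrow> i < n \<Longrightarrow>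
    (M *\<^sub>v v) $ i = (\<Sum>j<m. M $$ (i, j) * v $ j)"
  by (auto simp: scalar_prod_def atLeast0LessThan)

lemma pow_mat_Suc_left:
  assumes M: "M \<in> carrier_mat n n"
  shows "M ^\<^sub>m Suc k = M * M ^\<^sub>m k"
proof (induction k)
  case 0
  then show ?case using M by simp
next
  case (Suc k)
  have "M ^\<^sub>m Suc (Suc k) = (M * M ^\<^sub>m k) * M"
    by (simp add: Suc[symmetric])
  also have "\<dots> = M * M ^\<^sub>m Suc k"
    using M by (simp add: assoc_mult_mat[of _ n n _ n _ n])
  finally show ?case .
qed

lemma mat_entries_bounded:
  fixes M :: "real mat"
  obtains K where "0 \<le> K" and "\<And>i j. i < n \<Longrightarrow> j < n \<Longrightarrow> \<bar>M $$ (i, j)\<bar> \<le> K"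
proof
  let ?row = "\<lambda>i. \<Sum>j<n. \<bar>M $$ (i, j)\<bar>"
  show "0 \<le> (\<Sum>i<n. ?row i)" by (auto intro: sum_nonneg)
  fix i j assume "i < n" "j < n"
  have "\<bar>M $$ (i, j)\<bar> \<le> ?row i"
    using \<open>j < n\<close> by (intro member_le_sum) auto
  also have "\<dots> \<le> (\<Sum>i<n. ?row i)"
    using \<open>i < n\<close> by (intro member_le_sum[where f = ?row]) (auto intro: sum_nonneg)
  finally show "\<bar>M $$ (i, j)\<bar> \<le> (\<Sum>i<n. ?row i)" .
qed

lemma abs_index_pow_mat_le:
  fixes M :: "real mat"
  assumes M: "M \<in> carrier_mat n n" and K0: "0 \<le> K"
    and K: "\<And>i j. i < n \<Longrightarrow> j < n \<Longrightarrow> \<bar>M $$ (i, j)\<bar> \<le> K"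
    and "i < n" "j < n"
  shows "\<bar>(M ^\<^sub>m k) $$ (i, j)\<bar> \<le> (real n * K) ^ k"
  using \<open>i < n\<close> \<open>j < n\<close>
proof (induction k arbitrary: i j)
  case 0
  then show ?case using M by auto
next
  case (Suc k)
  have "(M ^\<^sub>m Suc k) $$ (i, j) = (\<Sum>l<n. (M ^\<^sub>m k) $$ (i, l) * M $$ (l, j))"
    unfolding pow_mat.simps by (rule index_mult_mat_sum[of _ n n _ n]) (use M Suc in auto)
  also have "\<bar>\<dots>\<bar> \<le> (\<Sum>l<n. \<bar>(M ^\<^sub>m k) $$ (i, l) * M $$ (l, j)\<bar>)" by (rule sum_abs)
  also have "\<dots> \<le> (\<Sum>l<n. (real n * K) ^ k * K)"
    by (intro sum_mono) (use Suc K K0 in \<open>auto simp: abs_mult intro!: mult_mono\<close>)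
  also have "\<dots> = (real n * K) ^ Suc k" by simp
  finally show ?case .
qed

lemma summable_mat_exp_series:
  fixes M :: "real mat"
  assumes M: "M \<in> carrier_mat n n" and ij: "i < n" "j < n"
  shows "summable (\<lambda>k. (M ^\<^sub>m k) $$ (i, j) / fact k * t ^ k)"
proof -
  obtain K where K0: "0 \<le> K" and K: "\<And>i j. i < n \<Longrightarrow> j < n \<Longrightarrow> \<bar>M $$ (i, j)\<bar> \<le> K"
    using mat_entries_bounded[of n M] by blast
  have bound: "norm ((M ^\<^sub>m k) $$ (i, j) / fact k * t ^ k) \<le> (real n * K * \<bar>t\<bar>) ^ k / fact k" for k
  proof -
    have "norm ((M ^\<^sub>m k) $$ (i, j) / fact k * t ^ k) = \<bar>(M ^\<^sub>m k) $$ (i, j)\<bar> * \<bar>t\<bar> ^ k / fact k"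
      by (simp add: abs_mult power_abs)
    also have "\<dots> \<le> (real n * K) ^ k * \<bar>t\<bar> ^ k / fact k"
      by (intro divide_right_mono mult_right_mono abs_index_pow_mat_le[OF M K0 K ij]) auto
    finally show ?thesis by (simp add: power_mult_distrib)
  qed
  have "summable (\<lambda>k. (real n * K * \<bar>t\<bar>) ^ k / fact k)"
    using summable_exp[of "real n * K * \<bar>t\<bar>"] by (simp add: field_simps)
  then show ?thesis
    by (rule summable_comparison_test_ev[OF always_eventually, rotated]) (use bound in blast)
qed

lemma mat_exp_carrier [simp]: "M \<in> carrier_mat n n \<Longrightarrow> mat_exp M t \<in> carrier_mat n n"
  unfolding mat_exp_def by auto

lemma index_mat_exp:
  "M \<in> carrier_mat n n \<Longrightarrow> i < n \<Longrightarrow> j < n \<Longrightarrow>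
    mat_exp M t $$ (i, j) = (\<Sum>k. (M ^\<^sub>m k) $$ (i, j) / fact k * t ^ k)"
  unfolding mat_exp_def by (simp add: mult.commute)

lemma mat_exp_zero:
  assumes M: "M \<in> carrier_mat n n"
  shows "mat_exp M 0 = 1\<^sub>m n"
proof (rule eq_matI)
  fix i j assume ij: "i < dim_row (1\<^sub>m n)" "j < dim_col (1\<^sub>m n)"
  have "(\<Sum>k. (M ^\<^sub>m k) $$ (i, j) / fact k * (0::real) ^ k) = (M ^\<^sub>m 0) $$ (i, j)"
    by (subst suminf_finite[of "{0}"]) auto
  then show "mat_exp M 0 $$ (i, j) = 1\<^sub>m n $$ (i, j)"
    using ij M by (simp add: index_mat_exp[OF M])
qed (use M in \<open>auto simp: mat_exp_def\<close>)

lemma index_mat_exp_has_real_derivative: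
  fixes M :: "real mat"
  assumes M: "M \<in> carrier_mat n n" and i: "i < n" and j: "j < n"
  shows "((\<lambda>t. mat_exp M t $$ (i, j)) has_real_derivative (M * mat_exp M t) $$ (i, j)) (at t)"
proof -
  define cf where "cf k = (M ^\<^sub>m k) $$ (i, j) / fact k" for k
  have "((\<lambda>t. \<Sum>k. cf k * t ^ k) has_real_derivative (\<Sum>k. diffs cf k * t ^ k)) (at t)"
    by (rule termdiffs_strong_converges_everywhere) (unfold cf_def, rule summable_mat_exp_series[OF M i j])
  moreover have "(\<lambda>t. \<Sum>k. cf k * t ^ k) = (\<lambda>t. mat_exp M t $$ (i, j))"
    unfolding cf_def by (simp add: index_mat_exp[OF M i j])
  moreover have "(\<Sum>k. diffs cf k * t ^ k) = (M * mat_exp M t) $$ (i, j)"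
  proof -
    have "diffs cf k * t ^ k = (\<Sum>l<n. M $$ (i, l) * ((M ^\<^sub>m k) $$ (l, j) / fact k * t ^ k))" for k
    proof -
      have "diffs cf k = (M ^\<^sub>m Suc k) $$ (i, j) / fact k"
        unfolding diffs_def cf_def fact_Suc by (simp del: of_nat_Suc)
      also have "(M ^\<^sub>m Suc k) $$ (i, j) = (\<Sum>l<n. M $$ (i, l) * (M ^\<^sub>m k) $$ (l, j))"
        unfolding pow_mat_Suc_left[OF M] by (rule index_mult_mat_sum[of _ n n _ n]) (use M i j in auto)
      finally show ?thesis by (simp add: sum_distrib_right sum_divide_distrib mult.assoc)
    qed
    then have "(\<Sum>k. diffs cf k * t ^ k) = (\<Sum>k. \<Sum>l<n. M $$ (i, l) * ((M ^\<^sub>m k) $$ (l, j) / fact k * t ^ k))"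
      by simp
    also have "\<dots> = (\<Sum>l<n. \<Sum>k. M $$ (i, l) * ((M ^\<^sub>m k) $$ (l, j) / fact k * t ^ k))"
      by (rule suminf_sum) (intro summable_mult summable_mat_exp_series[OF M _ j], simp)
    also have "\<dots> = (\<Sum>l<n. M $$ (i, l) * mat_exp M t $$ (l, j))"
    proof (intro sum.cong refl)
      fix l assume "l \<in> {..<n}"
      then show "(\<Sum>k. M $$ (i, l) * ((M ^\<^sub>m k) $$ (l, j) / fact k * t ^ k)) = M $$ (i, l) * mat_exp M t $$ (l, j)"
        using suminf_mult[OF summable_mat_exp_series[OF M _ j]] by (simp add: index_mat_exp[OF M _ j])
    qed
    also have "\<dots> = (M * mat_exp M t) $$ (i, j)"
      by (rule index_mult_mat_sum[symmetric]) (use M i j in auto)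
    finally show ?thesis .
  qed
  ultimately show ?thesis by simp
qed

lemma mat_exp_mult_vec_has_real_derivative:
  fixes M :: "real mat"
  assumes M: "M \<in> carrier_mat n n" and v: "v \<in> carrier_vec n" and i: "i < n"
  shows "((\<lambda>t. (mat_exp M t *\<^sub>v v) $ i) has_real_derivative (M *\<^sub>v (mat_exp M t *\<^sub>v v)) $ i) (at t)"
proof -
  have "((\<lambda>t. \<Sum>j<n. mat_exp M t $$ (i, j) * v $ j) has_real_derivative
      (\<Sum>j<n. (M * mat_exp M t) $$ (i, j) * v $ j)) (at t)"
    by (intro DERIV_sum DERIV_cmult_right index_mat_exp_has_real_derivative[OF M i]) auto
  moreover have "(\<Sum>j<n. (M * mat_exp M t) $$ (i, j) * v $ j) = (M *\<^sub>v (mat_exp M t *\<^sub>v v)) $ i"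
    using index_mult_mat_vec_sum[OF mult_carrier_mat[OF M mat_exp_carrier[OF M]] v i]
      M v by (simp add: assoc_mult_mat_vec[of _ n n _ n])
  ultimately show ?thesis
    using M v i by (simp add: index_mult_mat_vec_sum[of _ n n])
qed

lemma scalar_prod_mult_mat_vec_le:
  fixes M :: "real mat"
  assumes M: "M \<in> carrier_mat n n" and v: "v \<in> carrier_vec n"
    and K0: "0 \<le> K" and K: "\<And>i j. i < n \<Longrightarrow> j < n \<Longrightarrow> \<bar>M $$ (i, j)\<bar> \<le> K"
  shows "v \<bullet> (M *\<^sub>v v) \<le> real n * K * (v \<bullet> v)"
proof -
  have "v \<bullet> (M *\<^sub>v v) = (\<Sum>i<n. \<Sum>l<n. M $$ (i, l) * (v $ i * v $ l))"
    using M v by (simp add: scalar_prod_def atLeast0LessThan index_mult_mat_vec_sum[OF M v]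
        sum_distrib_left ac_simps)
  also have "\<dots> \<le> (\<Sum>i<n. \<Sum>l<n. K * (((v $ i)\<^sup>2 + (v $ l)\<^sup>2) / 2))"
  proof (intro sum_mono)
    fix i l assume "i \<in> {..<n}" "l \<in> {..<n}"
    then have "\<bar>M $$ (i, l)\<bar> \<le> K" by (auto intro: K)
    moreover have "\<bar>v $ i * v $ l\<bar> \<le> ((v $ i)\<^sup>2 + (v $ l)\<^sup>2) / 2"
      using sum_squares_bound[of "\<bar>v $ i\<bar>" "\<bar>v $ l\<bar>"] by (simp add: abs_mult power2_eq_square)
    moreover have "M $$ (i, l) * (v $ i * v $ l) \<le> \<bar>M $$ (i, l)\<bar> * \<bar>v $ i * v $ l\<bar>"
      by (metis abs_ge_self abs_mult)
    ultimately show "M $$ (i, l) * (v $ i * v $ l) \<le> K * (((v $ i)\<^sup>2 + (v $ l)\<^sup>2) / 2)"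
      using K0 by (meson abs_ge_zero mult_mono order_trans)
  qed
  also have "\<dots> = real n * K * (\<Sum>i<n. (v $ i)\<^sup>2)"
    by (simp add: sum_distrib_left sum.distrib algebra_simps add_divide_distrib)
  also have "(\<Sum>i<n. (v $ i)\<^sup>2) = v \<bullet> v"
    using v by (simp add: scalar_prod_def atLeast0LessThan power2_eq_square)
  finally show ?thesis .
qed

lemma scalar_prod_self_has_real_derivative:
  fixes w :: "real \<Rightarrow> real vec"
  assumes w: "\<And>s. w s \<in> carrier_vec n"
    and w': "\<And>i. i < n \<Longrightarrow> ((\<lambda>s. w s $ i) has_real_derivative d $ i) (at t within S)"
    and d: "d \<in> carrier_vec n"
  shows "((\<lambda>s. w s \<bullet> w s) has_real_derivative 2 * (w t \<bullet> d)) (at t within S)"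
proof -
  have "((\<lambda>s. \<Sum>i<n. w s $ i * w s $ i) has_real_derivative (\<Sum>i<n. 2 * (w t $ i * d $ i)))
      (at t within S)"
    by (intro DERIV_sum) (rule DERIV_cong[OF DERIV_mult[OF w' w']], auto)
  then show ?thesis
    using carrier_vecD[OF w] carrier_vecD[OF d]
    by (simp add: scalar_prod_def atLeast0LessThan sum_distrib_left)
qed

text \<open>With \<open>K\<close> bounding the entries of \<open>M\<close>, the function \<open>exp (-2 n K t) |w t|\<^sup>2\<close>
  is non-increasing and vanishes at \<open>0\<close>.\<close>
lemma linear_ode_solution_eq_zero:
  fixes M :: "real mat" and w :: "real \<Rightarrow> real vec"
  assumes M: "M \<in> carrier_mat n n" and w: "\<And>t. w t \<in> carrier_vec n" and T: "0 \<le> T"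
    and w': "\<And>i t. i < n \<Longrightarrow> t \<in> {0..T} \<Longrightarrow>
        ((\<lambda>s. w s $ i) has_real_derivative (M *\<^sub>v w t) $ i) (at t within {0..T})"
    and w0: "w 0 = 0\<^sub>v n"
  shows "w T = 0\<^sub>v n"
proof -
  obtain K where K0: "0 \<le> K" and K: "\<And>i j. i < n \<Longrightarrow> j < n \<Longrightarrow> \<bar>M $$ (i, j)\<bar> \<le> K"
    using mat_entries_bounded[of n M] by blast
  define L where "L = real n * K"
  define V where "V s = w s \<bullet> w s" for s
  define D where "D t = exp (- (2 * L) * t) * (2 * (w t \<bullet> (M *\<^sub>v w t)) - 2 * L * V t)" for t
  define W where "W s = exp (- (2 * L) * s) * V s" for s
  have V': "(V has_real_derivative 2 * (w t \<bullet> (M *\<^sub>v w t))) (at t within {0..T})"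
    if t: "t \<in> {0..T}" for t
    unfolding V_def[abs_def]
    by (rule scalar_prod_self_has_real_derivative[OF w w'[OF _ t] mult_mat_vec_carrier[OF M w]])
  have W': "(W has_real_derivative D t) (at t within {0..T})" if t: "t \<in> {0..T}" for t
    unfolding W_def D_def
    by (rule DERIV_cong, rule DERIV_mult[OF _ V'[OF t]], rule DERIV_cong,
        rule DERIV_chain2[where f = exp, OF DERIV_exp], rule DERIV_cong, rule DERIV_cmult_Id)
      (auto simp: algebra_simps)
  have D_nonpos: "D t \<le> 0" for t
    using scalar_prod_mult_mat_vec_le[OF M w K0 K, of t]
    by (simp add: D_def mult_nonneg_nonpos V_def L_def)
  have "\<exists>t\<in>{0..T}. W T - W 0 = D t * (T - 0)"
    by (rule mvt_very_simple[OF T]) (use W' in \<open>auto simp: has_field_derivative_def\<close>)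
  moreover have "W 0 = 0" using w0 by (simp add: W_def V_def)
  ultimately have "W T \<le> 0"
    using D_nonpos T by (auto simp: mult_nonpos_nonneg)
  then have "V T \<le> 0" by (simp add: W_def mult_le_0_iff)
  have "w T $ i = 0" if i: "i < n" for i
  proof -
    have "(w T $ i)\<^sup>2 \<le> (\<Sum>j<n. (w T $ j)\<^sup>2)"
      using i by (intro member_le_sum) auto
    also have "\<dots> = V T"
      using w[of T] by (simp add: V_def scalar_prod_def atLeast0LessThan power2_eq_square)
    finally have "(w T $ i)\<^sup>2 \<le> 0" using \<open>V T \<le> 0\<close> by linarith
    then show ?thesis by simp
  qed
  then show ?thesis using w[of T] by (intro eq_vecI) auto
qed

lemma linear_ode_solution_eq_mat_exp:
  fixes M :: "real mat" and z :: "real \<Rightarrow> real vec"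
  assumes M: "M \<in> carrier_mat n n" and z: "\<And>t. z t \<in> carrier_vec n" and T: "0 \<le> T"
    and z': "\<And>i t. i < n \<Longrightarrow> t \<in> {0..T} \<Longrightarrow>
        ((\<lambda>s. z s $ i) has_real_derivative (M *\<^sub>v z t) $ i) (at t within {0..T})"
  shows "z T = mat_exp M T *\<^sub>v z 0"
proof -
  define w where "w t = z t - mat_exp M t *\<^sub>v z 0" for t
  have e: "mat_exp M t *\<^sub>v z 0 \<in> carrier_vec n" for t
    using mult_mat_vec_carrier[OF mat_exp_carrier[OF M] z] .
  have w: "w t \<in> carrier_vec n" for t
    using e z unfolding w_def by simp
  have w_index: "w s $ i = z s $ i - (mat_exp M s *\<^sub>v z 0) $ i" if "i < n" for s i
    using that carrier_vecD[OF e[of s]] by (simp add: w_def)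
  have "w T = 0\<^sub>v n"
  proof (rule linear_ode_solution_eq_zero[OF M w T])
    fix i t assume i: "i < n" and t: "t \<in> {0..T}"
    have "((\<lambda>s. z s $ i - (mat_exp M s *\<^sub>v z 0) $ i) has_real_derivative
        (M *\<^sub>v z t) $ i - (M *\<^sub>v (mat_exp M t *\<^sub>v z 0)) $ i) (at t within {0..T})"
      using DERIV_diff[OF z'[OF i t] has_field_derivative_at_within[OF
            mat_exp_mult_vec_has_real_derivative[OF M z i]]] .
    moreover have "M *\<^sub>v w t = M *\<^sub>v z t - M *\<^sub>v (mat_exp M t *\<^sub>v z 0)"
      unfolding w_def using M z e by (intro mult_minus_distrib_mat_vec) auto
    ultimately show "((\<lambda>s. w s $ i) has_real_derivative (M *\<^sub>v w t) $ i) (at t within {0..T})"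
      using M i by (simp add: w_index)
  next
    show "w 0 = 0\<^sub>v n"
      using M z by (simp add: w_def mat_exp_zero)
  qed
  then have "z T $ i = (mat_exp M T *\<^sub>v z 0) $ i" if "i < n" for i
    using w_index[OF that, of T] that by simp
  then show ?thesis
    using carrier_vecD[OF e[of T]] carrier_vecD[OF z[of T]] by (intro eq_vecI) auto
qed

section \<open>Solutions in integral form\<close>

lemma is_solutionD:
  fixes z F :: "real \<Rightarrow> real vec"
  assumes "is_solution m z F z0"
  shows "z t \<in> carrier_vec m" and "z 0 = z0"
    and "0 \<le> t \<Longrightarrow> i < m \<Longrightarrow> ((\<lambda>s. F s $ i) has_integral (z t $ i - z0 $ i)) {0..t}"
  using assms unfolding is_solution_def by blast+

lemma is_solution_cong:
  fixes z F G :: "real \<Rightarrow> real vec"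
  assumes sol: "is_solution m z F z0" and FG: "\<And>s. 0 \<le> s \<Longrightarrow> F s = G s"
  shows "is_solution m z G z0"
  unfolding is_solution_def
proof (intro conjI allI impI)
  fix t :: real and i assume "0 \<le> t" "i < m"
  then show "((\<lambda>s. G s $ i) has_integral z t $ i - z0 $ i) {0..t}"
    using FG by (intro has_integral_eq[OF _ is_solutionD(3)[OF sol]]) auto
qed (use is_solutionD[OF sol] in auto)

lemma is_solution_mult_mat:
  fixes z F :: "real \<Rightarrow> real vec"
  assumes sol: "is_solution n z F z0" and M: "M \<in> carrier_mat m n"
    and F: "\<And>s. F s \<in> carrier_vec n"
  shows "is_solution m (\<lambda>t. M *\<^sub>v z t) (\<lambda>s. M *\<^sub>v F s) (M *\<^sub>v z0)"
  unfolding is_solution_def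
proof (intro conjI allI impI)
  fix t :: real and i assume t: "0 \<le> t" and i: "i < m"
  have z: "z t \<in> carrier_vec n" "z0 \<in> carrier_vec n"
    using is_solutionD(1,2)[OF sol] by metis+
  have "((\<lambda>s. \<Sum>j<n. M $$ (i, j) * F s $ j) has_integral (\<Sum>j<n. M $$ (i, j) * (z t $ j - z0 $ j))) {0..t}"
    by (intro has_integral_sum has_integral_mult_right is_solutionD(3)[OF sol t]) auto
  then show "((\<lambda>s. (M *\<^sub>v F s) $ i) has_integral (M *\<^sub>v z t) $ i - (M *\<^sub>v z0) $ i) {0..t}"
    unfolding index_mult_mat_vec_sum[OF M F i] index_mult_mat_vec_sum[OF M z(1) i]
      index_mult_mat_vec_sum[OF M z(2) i]
    by (simp add: right_diff_distrib sum_subtractf)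
qed (use is_solutionD[OF sol] M in auto)

lemma is_solution_diff:
  fixes z w F G :: "real \<Rightarrow> real vec"
  assumes sol1: "is_solution n z F z0" and sol2: "is_solution n w G w0"
    and G: "\<And>s. G s \<in> carrier_vec n"
  shows "is_solution n (\<lambda>t. z t - w t) (\<lambda>s. F s - G s) (z0 - w0)"
  unfolding is_solution_def
proof (intro conjI allI impI)
  fix t :: real and i assume t: "0 \<le> t" and i: "i < n"
  have "((\<lambda>s. F s $ i - G s $ i) has_integral (z t $ i - z0 $ i) - (w t $ i - w0 $ i)) {0..t}"
    by (intro has_integral_diff is_solutionD(3)[OF sol1 t i] is_solutionD(3)[OF sol2 t i])
  moreover have "w0 \<in> carrier_vec n" "w t \<in> carrier_vec n"
    using is_solutionD(1,2)[OF sol2] by metis+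
  ultimately show "((\<lambda>s. (F s - G s) $ i) has_integral (z t - w t) $ i - (z0 - w0) $ i) {0..t}"
    using G i by (simp add: carrier_vecD[OF G] algebra_simps)
qed (use is_solutionD[OF sol1] is_solutionD[OF sol2] in auto)

lemma is_solution_append:
  fixes z w F G :: "real \<Rightarrow> real vec"
  assumes sol1: "is_solution n z F z0" and sol2: "is_solution m w G w0"
    and F: "\<And>s. F s \<in> carrier_vec n" and G: "\<And>s. G s \<in> carrier_vec m"
  shows "is_solution (n + m) (\<lambda>t. z t @\<^sub>v w t) (\<lambda>s. F s @\<^sub>v G s) (z0 @\<^sub>v w0)"
  unfolding is_solution_def
proof (intro conjI allI impI)
  fix t :: real and i assume t: "0 \<le> t" and i: "i < n + m"
  have dims: "dim_vec (z t) = n" "dim_vec z0 = n" "\<And>s. dim_vec (F s) = n"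
      "dim_vec (w t) = m" "dim_vec w0 = m" "\<And>s. dim_vec (G s) = m"
    using carrier_vecD[OF is_solutionD(1)[OF sol1]] carrier_vecD[OF is_solutionD(1)[OF sol2]]
      is_solutionD(2)[OF sol1] is_solutionD(2)[OF sol2] carrier_vecD[OF F] carrier_vecD[OF G]
    by metis+
  show "((\<lambda>s. (F s @\<^sub>v G s) $ i) has_integral (z t @\<^sub>v w t) $ i - (z0 @\<^sub>v w0) $ i) {0..t}"
  proof (cases "i < n")
    case True
    then show ?thesis using is_solutionD(3)[OF sol1 t True] dims i by simp
  next
    case False
    then have "i - n < m" using i by simp
    then show ?thesis using is_solutionD(3)[OF sol2 t] False dims i by simp
  qed
qed (use is_solutionD[OF sol1] is_solutionD[OF sol2] in auto)

lemma is_solution_eq_integral: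
  fixes z F :: "real \<Rightarrow> real vec"
  assumes "is_solution m z F z0" "i < m" "0 \<le> t"
  shows "z t $ i = z0 $ i + integral {0..t} (\<lambda>s. F s $ i)"
  using integral_unique[OF is_solutionD(3)[OF assms(1,3,2)]] by simp

lemma is_solution_continuous_on:
  fixes z F :: "real \<Rightarrow> real vec"
  assumes sol: "is_solution m z F z0" and i: "i < m"
  shows "continuous_on {0..T} (\<lambda>t. z t $ i)"
proof (cases "0 \<le> T")
  case True
  have "(\<lambda>s. F s $ i) integrable_on {0..T}"
    using is_solutionD(3)[OF sol True i] by blast
  then have "continuous_on {0..T} (\<lambda>t. z0 $ i + integral {0..t} (\<lambda>s. F s $ i))"
    by (intro continuous_intros indefinite_integral_continuous_1)
  moreover have "z t $ i = z0 $ i + integral {0..t} (\<lambda>s. F s $ i)" if "t \<in> {0..T}" for t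
    using is_solution_eq_integral[OF sol i] that by simp
  ultimately show ?thesis by (metis (no_types, lifting) continuous_on_cong)
qed simp

lemma is_solution_has_real_derivative:
  fixes z F :: "real \<Rightarrow> real vec"
  assumes sol: "is_solution m z F z0" and i: "i < m"
    and F: "continuous_on {0..T} (\<lambda>s. F s $ i)" and t: "t \<in> {0..T}"
  shows "((\<lambda>s. z s $ i) has_real_derivative F t $ i) (at t within {0..T})"
proof -
  have "z s $ i = z0 $ i + integral {0..s} (\<lambda>s. F s $ i)" if "s \<in> {0..T}" for s
    using is_solution_eq_integral[OF sol i] that by simp
  moreover have "((\<lambda>s. z0 $ i + integral {0..s} (\<lambda>s. F s $ i)) has_vector_derivative F t $ i)
      (at t within {0..T})"
    using has_vector_derivative_add[OF has_vector_derivative_const integral_has_vector_derivative[OF F t]]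
    by simp
  ultimately have "((\<lambda>s. z s $ i) has_vector_derivative F t $ i) (at t within {0..T})"
    by (rule has_vector_derivative_transform[OF t])
  then show ?thesis by (simp add: has_real_derivative_iff_has_vector_derivative)
qed

lemma is_solution_linear_eq_mat_exp:
  fixes z :: "real \<Rightarrow> real vec"
  assumes M: "M \<in> carrier_mat n n" and sol: "is_solution n z (\<lambda>s. M *\<^sub>v z s) z0" and t: "0 \<le> t"
  shows "z t = mat_exp M t *\<^sub>v z0"
proof -
  have z: "z s \<in> carrier_vec n" for s by (rule is_solutionD(1)[OF sol])
  have "continuous_on {0..t} (\<lambda>s. (M *\<^sub>v z s) $ i)" if i: "i < n" for i
    unfolding index_mult_mat_vec_sum[OF M z i]
    by (intro continuous_intros is_solution_continuous_on[OF sol]) auto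
  then have "z t = mat_exp M t *\<^sub>v z 0"
    by (intro linear_ode_solution_eq_mat_exp[OF M z t] is_solution_has_real_derivative[OF sol])
  then show ?thesis using is_solutionD(2)[OF sol] by simp
qed

section \<open>Companion and Bezout matrices\<close>

definition coeffs_poly :: "nat \<Rightarrow> (nat \<Rightarrow> real) \<Rightarrow> real poly" where
  "coeffs_poly n b = (\<Sum>k=1..n. monom (b k) (n - k))"

definition monic_coeffs_poly :: "nat \<Rightarrow> (nat \<Rightarrow> real) \<Rightarrow> real poly" where
  "monic_coeffs_poly n a = monom 1 n + coeffs_poly n a"

lemma coeff_coeffs_poly: "coeff (coeffs_poly n b) j = (if j < n then b (n - j) else 0)"
proof -
  have "(\<Sum>k=1..n. if n - k = j then b k else 0) = (\<Sum>k\<in>{1..n}. if k = n - j \<and> j < n then b k else 0)"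
    by (intro sum.cong) auto
  then show ?thesis
    by (simp add: coeffs_poly_def coeff_sum coeff_monom) linarith
qed

lemma coeff_monic_coeffs_poly:
  "coeff (monic_coeffs_poly n a) j = (if j = n then 1 else if j < n then a (n - j) else 0)"
  by (simp add: monic_coeffs_poly_def coeff_coeffs_poly coeff_monom)

lemma degree_coeffs_poly_less:
  assumes "0 < n"
  shows "degree (coeffs_poly n b) < n"
proof -
  have "degree (coeffs_poly n b) \<le> n - 1"
    by (rule degree_le) (auto simp: coeff_coeffs_poly)
  then show ?thesis using assms by simp
qed

lemma degree_monic_coeffs_poly [simp]: "degree (monic_coeffs_poly n a) = n"
  by (rule antisym; (rule degree_le le_degree)?) (auto simp: coeff_monic_coeffs_poly)

lemma lead_coeff_monic_coeffs_poly [simp]: "lead_coeff (monic_coeffs_poly n a) = 1"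
  by (simp add: coeff_monic_coeffs_poly)

lemma poly_map_poly_of_real_coeffs_poly:
  "poly (map_poly of_real (coeffs_poly n b)) (z :: complex) = (\<Sum>k=1..n. of_real (b k) * z ^ (n - k))"
proof -
  have "map_poly of_real (coeffs_poly n b) = (\<Sum>k=1..n. monom (of_real (b k) :: complex) (n - k))"
    by (simp add: poly_eq_iff coeff_map_poly coeffs_poly_def coeff_sum coeff_monom of_real_sum if_distrib
        cong: if_cong)
  then show ?thesis by (simp add: poly_sum poly_monom)
qed

lemma poly_map_poly_of_real_monic_coeffs_poly:
  "poly (map_poly of_real (monic_coeffs_poly n a)) (z :: complex) = z ^ n + (\<Sum>k=1..n. of_real (a k) * z ^ (n - k))"
proof -
  have "map_poly of_real (monic_coeffs_poly n a) = monom (1 :: complex) n + map_poly of_real (coeffs_poly n a)"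
    by (simp add: poly_eq_iff coeff_map_poly monic_coeffs_poly_def coeff_monom)
  then show ?thesis by (simp add: poly_map_poly_of_real_coeffs_poly poly_monom)
qed

lemma dim_comp_mat [simp]: "dim_row (comp_mat n c) = n" "dim_col (comp_mat n c) = n"
  by (simp_all add: comp_mat_def)

lemma comp_mat_carrier [simp]: "comp_mat n c \<in> carrier_mat n n"
  by (simp add: carrier_matI)

lemma index_comp_mat:
  "i < n \<Longrightarrow> j < n \<Longrightarrow> comp_mat n c $$ (i, j) =
    (if i = n - 1 then - coeff (monic_coeffs_poly n c) j else if j = Suc i then 1 else 0)"
  by (simp add: comp_mat_def coeff_monic_coeffs_poly)

lemma A_obs_eq_transpose_comp_mat: "A_obs n a = transpose_mat (comp_mat n a)"
  by (rule eq_matI) (auto simp: A_obs_def comp_mat_def)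

lemma comp_mat_mult_vec_index:
  assumes v: "v \<in> carrier_vec n" and i: "i < n"
  shows "(comp_mat n c *\<^sub>v v) $ i =
    (if i = n - 1 then - (\<Sum>j<n. coeff (monic_coeffs_poly n c) j * v $ j) else v $ Suc i)"
proof -
  have "(comp_mat n c *\<^sub>v v) $ i = (\<Sum>j<n. comp_mat n c $$ (i, j) * v $ j)"
    by (rule index_mult_mat_vec_sum[OF comp_mat_carrier v i])
  also have "\<dots> = (\<Sum>j<n. if i = n - 1 then - (coeff (monic_coeffs_poly n c) j * v $ j)
      else if j = Suc i then v $ j else 0)"
    using i by (intro sum.cong) (auto simp: index_comp_mat)
  finally show ?thesis using i by (auto simp: sum_negf)
qed

lemma transpose_comp_mat_mult_vec_index:
  assumes v: "v \<in> carrier_vec n" and i: "i < n"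
  shows "(transpose_mat (comp_mat n c) *\<^sub>v v) $ i =
    (if i = 0 then 0 else v $ (i - 1)) - coeff (monic_coeffs_poly n c) i * v $ (n - 1)"
proof -
  have "(transpose_mat (comp_mat n c) *\<^sub>v v) $ i = (\<Sum>j<n. transpose_mat (comp_mat n c) $$ (i, j) * v $ j)"
    by (rule index_mult_mat_vec_sum) (use v i in auto)
  also have "\<dots> = (\<Sum>j<n. comp_mat n c $$ (j, i) * v $ j)"
    using i by (intro sum.cong) auto
  also have "\<dots> = (\<Sum>j<n. (if j = n - 1 then - coeff (monic_coeffs_poly n c) i * v $ j else 0)
      + (if j = i - 1 \<and> i \<noteq> 0 then v $ j else 0))"
    using i by (intro sum.cong) (auto simp: index_comp_mat)
  finally show ?thesis using i by (simp add: sum.distrib)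
qed

text \<open>The entry \<open>(i, j)\<close> is the coefficient of \<open>x\<^sup>i y\<^sup>j\<close> in the Bezoutian
  \<open>(p(x) q(y) - q(x) p(y)) / (x - y)\<close>.\<close>
definition bezout_mat :: "nat \<Rightarrow> real poly \<Rightarrow> real poly \<Rightarrow> real mat" where
  "bezout_mat n p q = mat n n (\<lambda>(i, j). \<Sum>k\<le>min i j.
     coeff p (i + j + 1 - k) * coeff q k - coeff q (i + j + 1 - k) * coeff p k)"

lemma dim_bezout_mat [simp]: "dim_row (bezout_mat n p q) = n" "dim_col (bezout_mat n p q) = n"
  by (simp_all add: bezout_mat_def)

lemma bezout_mat_carrier [simp]: "bezout_mat n p q \<in> carrier_mat n n"
  by (simp add: carrier_matI)

lemma transpose_bezout_mat: "transpose_mat (bezout_mat n p q) = bezout_mat n p q"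
  by (rule eq_matI) (auto simp: bezout_mat_def min.commute add.commute)

lemma bezout_mat_first_row:
  "j < n \<Longrightarrow> bezout_mat n p q $$ (0, j) = coeff p (Suc j) * coeff q 0 - coeff q (Suc j) * coeff p 0"
  by (simp add: bezout_mat_def)

lemma bezout_mat_shift:
  assumes "Suc i < n" "Suc j < n"
  shows "bezout_mat n p q $$ (i, Suc j) =
    bezout_mat n p q $$ (Suc i, j) + coeff q (Suc j) * coeff p (Suc i) - coeff p (Suc j) * coeff q (Suc i)"
proof -
  define g where "g k = coeff p (i + j + 2 - k) * coeff q k - coeff q (i + j + 2 - k) * coeff p k" for k
  have entry: "bezout_mat n p q $$ (i', j') = (\<Sum>k\<le>min i' j'. g k)"
    if "i' < n" "j' < n" "i' + j' = Suc (i + j)" for i' j'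
    using that by (simp add: bezout_mat_def g_def)
  consider "i < j" | "i = j" | "j < i" by linarith
  then show ?thesis
  proof cases
    case 1
    then have "min (Suc i) j = Suc (min i (Suc j))" by simp
    then show ?thesis using 1 assms by (simp add: entry g_def)
  next
    case 2
    then show ?thesis using assms by (simp add: entry)
  next
    case 3
    then have "min i (Suc j) = Suc (min (Suc i) j)" by simp
    then show ?thesis using 3 assms by (simp add: entry g_def)
  qed
qed

lemma bezout_mat_last_col:
  assumes p: "degree p = n" "lead_coeff p = 1" and q: "degree q < n" and i: "i < n"
  shows "bezout_mat n p q $$ (i, n - 1) = coeff q i"
proof -
  have "n - 1 < n" using i by simp
  then have "bezout_mat n p q $$ (i, n - 1) =
      (\<Sum>k\<le>i. coeff p (i + (n - 1) + 1 - k) * coeff q k - coeff q (i + (n - 1) + 1 - k) * coeff p k)"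
    using i by (simp add: bezout_mat_def)
  also have "\<dots> = (\<Sum>k\<le>i. if k = i then coeff q i else 0)"
  proof (intro sum.cong refl)
    fix k assume "k \<in> {..i}"
    then have "n \<le> i + (n - 1) + 1 - k" and "k = i \<or> n < i + (n - 1) + 1 - k" using i by auto
    then show "coeff p (i + (n - 1) + 1 - k) * coeff q k - coeff q (i + (n - 1) + 1 - k) * coeff p k =
        (if k = i then coeff q i else 0)"
      using p q by (auto simp: coeff_eq_0)
  qed
  finally show ?thesis by simp
qed

lemma bezout_mat_last_row:
  assumes "degree p = n" "lead_coeff p = 1" "degree q < n" and j: "j < n"
  shows "bezout_mat n p q $$ (n - 1, j) = coeff q j"
proof -
  have "bezout_mat n p q $$ (n - 1, j) = transpose_mat (bezout_mat n p q) $$ (j, n - 1)"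
    using j by (simp add: bezout_mat_def)
  also have "\<dots> = coeff q j"
    unfolding transpose_bezout_mat by (rule bezout_mat_last_col[OF assms])
  finally show ?thesis .
qed

lemma B_r_carrier [simp]: "B_r n \<in> carrier_vec n"
  by (simp add: B_r_def)

lemma dim_B_r [simp]: "dim_vec (B_r n) = n"
  by (simp add: B_r_def)

lemma filter_rhs_carrier: "v \<in> carrier_vec n \<Longrightarrow> comp_mat n c *\<^sub>v v + w \<cdot>\<^sub>v B_r n \<in> carrier_vec n"
  by (intro add_carrier_vec mult_mat_vec_carrier[OF comp_mat_carrier]) simp_all

lemma transpose_comp_mat_mult_bezout_mat_index:
  fixes c :: "nat \<Rightarrow> real"
  assumes n: "0 < n" and q: "degree q < n" and il: "i < n" "l < n"
  defines "P \<equiv> bezout_mat n (monic_coeffs_poly n c) q"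
  shows "(transpose_mat (comp_mat n c) * P) $$ (i, l) =
    (if i = 0 then 0 else P $$ (i - 1, l)) - coeff (monic_coeffs_poly n c) i * coeff q l"
proof -
  have "(transpose_mat (comp_mat n c) * P) $$ (i, l) = (transpose_mat (comp_mat n c) *\<^sub>v col P l) $ i"
    using il by (simp add: P_def)
  also have "\<dots> = (if i = 0 then 0 else P $$ (i - 1, l)) - coeff (monic_coeffs_poly n c) i * P $$ (n - 1, l)"
    using il n by (subst transpose_comp_mat_mult_vec_index) (auto simp: P_def)
  also have "P $$ (n - 1, l) = coeff q l"
    unfolding P_def by (rule bezout_mat_last_row) (use q il in \<open>auto simp: coeff_monic_coeffs_poly\<close>)
  finally show ?thesis .
qed

text \<open>As the Bezoutian is symmetric, this amounts to the symmetry of \<open>A\<^sup>T P\<close>.\<close>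
lemma bezout_mat_comp_mat:
  fixes c :: "nat \<Rightarrow> real"
  assumes n: "0 < n" and q: "degree q < n"
  defines "P \<equiv> bezout_mat n (monic_coeffs_poly n c) q"
  shows "P * comp_mat n c = transpose_mat (comp_mat n c) * P"
proof -
  let ?p = "monic_coeffs_poly n c" and ?AtP = "transpose_mat (comp_mat n c) * P"
  have entry: "?AtP $$ (i, l) = (if i = 0 then 0 else P $$ (i - 1, l)) - coeff ?p i * coeff q l"
    if "i < n" "l < n" for i l
    unfolding P_def by (rule transpose_comp_mat_mult_bezout_mat_index[OF n q that])
  have P_sym: "P $$ (i, l) = P $$ (l, i)" if "i < n" "l < n" for i l
    using arg_cong[OF transpose_bezout_mat, of "\<lambda>M. M $$ (l, i)" n ?p q] that by (simp add: P_def)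
  have first_row: "P $$ (0, j) = coeff ?p (Suc j) * coeff q 0 - coeff q (Suc j) * coeff ?p 0"
    if "j < n" for j
    unfolding P_def using that by (rule bezout_mat_first_row)
  have shift: "P $$ (i, Suc j) = P $$ (Suc i, j) + coeff q (Suc j) * coeff ?p (Suc i) - coeff ?p (Suc j) * coeff q (Suc i)"
    if "Suc i < n" "Suc j < n" for i j
    unfolding P_def using that by (rule bezout_mat_shift)
  have "?AtP $$ (i, l) = ?AtP $$ (l, i)" if il: "i < n" "l < n" for i l
  proof -
    have "(if i = 0 then 0 else P $$ (i - 1, l)) - coeff ?p i * coeff q l =
        (if l = 0 then 0 else P $$ (l - 1, i)) - coeff ?p l * coeff q i"
    proof (cases i; cases l)
      fix i' l' assume "i = Suc i'" "l = Suc l'"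
      then show ?thesis using il shift[of i' l'] P_sym[of i l'] by simp
    qed (use il first_row P_sym in auto)
    then show ?thesis unfolding entry[OF il] entry[OF il(2,1)] .
  qed
  then have "transpose_mat ?AtP = ?AtP"
    by (intro eq_matI) (auto simp: P_def)
  moreover have "transpose_mat ?AtP = P * comp_mat n c"
    by (simp add: transpose_mult[of _ n n _ n] P_def transpose_bezout_mat)
  ultimately show ?thesis by simp
qed

lemma bezout_mat_mult_vec_last:
  assumes "degree p = n" "lead_coeff p = 1" "degree q < n" and v: "v \<in> carrier_vec n" and n: "0 < n"
  shows "(bezout_mat n p q *\<^sub>v v) $ (n - 1) = (\<Sum>j<n. coeff q j * v $ j)"
proof -
  have "n - 1 < n" using n by simp
  then show ?thesis
    unfolding index_mult_mat_vec_sum[OF bezout_mat_carrier v \<open>n - 1 < n\<close>]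
    using bezout_mat_last_row[OF assms(1-3)] by simp
qed

lemma bezout_mat_mult_B_r:
  assumes p: "degree p = n" "lead_coeff p = 1" and q: "degree q < n" and n: "0 < n"
  shows "bezout_mat n p q *\<^sub>v B_r n = vec n (coeff q)"
proof (rule eq_vecI)
  fix i assume "i < dim_vec (vec n (coeff q))"
  then have i: "i < n" by simp
  have "(bezout_mat n p q *\<^sub>v B_r n) $ i = (\<Sum>j<n. bezout_mat n p q $$ (i, j) * B_r n $ j)"
    by (rule index_mult_mat_vec_sum[OF bezout_mat_carrier B_r_carrier i])
  also have "\<dots> = (\<Sum>j<n. bezout_mat n p q $$ (i, j) * (if j = n - 1 then 1 else 0))"
    by (simp add: B_r_def)
  also have "\<dots> = bezout_mat n p q $$ (i, n - 1)"
    using n by (simp add: if_distrib cong: if_cong)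
  also have "\<dots> = coeff q i"
    by (rule bezout_mat_last_col[OF p q i])
  finally show "(bezout_mat n p q *\<^sub>v B_r n) $ i = vec n (coeff q) $ i" using i by simp
qed simp

lemma bezout_mat_filter:
  fixes c :: "nat \<Rightarrow> real"
  assumes n: "0 < n" and q: "degree q < n" and v: "v \<in> carrier_vec n"
  defines "P \<equiv> bezout_mat n (monic_coeffs_poly n c) q"
  shows "P *\<^sub>v (comp_mat n c *\<^sub>v v + w \<cdot>\<^sub>v B_r n) =
    transpose_mat (comp_mat n c) *\<^sub>v (P *\<^sub>v v) + w \<cdot>\<^sub>v vec n (coeff q)"
proof -
  have PBr: "P *\<^sub>v B_r n = vec n (coeff q)"
    unfolding P_def using n q by (intro bezout_mat_mult_B_r) (simp_all add: coeff_monic_coeffs_poly)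
  have P: "P \<in> carrier_mat n n" by (simp add: P_def)
  have "P *\<^sub>v (comp_mat n c *\<^sub>v v + w \<cdot>\<^sub>v B_r n) = P *\<^sub>v (comp_mat n c *\<^sub>v v) + w \<cdot>\<^sub>v (P *\<^sub>v B_r n)"
    using mult_add_distrib_mat_vec[OF P mult_mat_vec_carrier[OF comp_mat_carrier v]
        smult_carrier_vec[THEN iffD2, OF B_r_carrier]] mult_mat_vec[OF P B_r_carrier] by simp
  also have "P *\<^sub>v (comp_mat n c *\<^sub>v v) = transpose_mat (comp_mat n c) *\<^sub>v (P *\<^sub>v v)"
    using bezout_mat_comp_mat[OF n q, of c, folded P_def] P v
    by (simp add: assoc_mult_mat_vec[symmetric, of _ n n _ n])
  finally show ?thesis unfolding PBr .
qed

section \<open>Shift operators and reachability\<close>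

text \<open>\<open>shift_apply p y\<close> is \<open>p(\<sigma>) y\<close>, where \<open>\<sigma>\<close> is the left shift
  \<open>(\<sigma> y) i = y (i + 1)\<close>.\<close>
definition shift_apply :: "'a::comm_ring_1 poly \<Rightarrow> (nat \<Rightarrow> 'a) \<Rightarrow> nat \<Rightarrow> 'a" where
  "shift_apply p y i = (\<Sum>j\<le>degree p. coeff p j * y (i + j))"

lemma shift_apply_eq_sum:
  assumes "degree p < m"
  shows "shift_apply p y i = (\<Sum>j<m. coeff p j * y (i + j))"
proof -
  have "(\<Sum>j<m. coeff p j * y (i + j)) = (\<Sum>j\<le>degree p. coeff p j * y (i + j))"
    by (rule sum.mono_neutral_right) (use assms in \<open>auto intro: le_degree\<close>)
  then show ?thesis unfolding shift_apply_def by simp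
qed

lemma shift_apply_monic:
  assumes "degree p = d" "lead_coeff p = 1"
  shows "shift_apply p y i = y (i + d) + (\<Sum>j<d. coeff p j * y (i + j))"
  using assms by (simp add: shift_apply_def lessThan_Suc_atMost[symmetric])

lemma shift_apply_0 [simp]: "shift_apply 0 y i = 0"
  by (simp add: shift_apply_def)

lemma shift_apply_zero_seq [simp]: "shift_apply p (\<lambda>_. 0) i = 0"
  by (simp add: shift_apply_def)

lemma shift_apply_add: "shift_apply (p + q) y i = shift_apply p y i + shift_apply q y i"
proof -
  define m where "m = Suc (max (degree p) (degree q))"
  have "degree (p + q) < m" "degree p < m" "degree q < m"
    unfolding m_def using degree_add_le_max[of p q] by auto
  then show ?thesis by (simp add: shift_apply_eq_sum distrib_right sum.distrib)
qed

lemma shift_apply_smult: "shift_apply (Polynomial.smult a p) y i = a * shift_apply p y i"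
proof -
  have d: "degree (Polynomial.smult a p) < Suc (degree p)"
    using degree_smult_le[of a p] by auto
  show ?thesis
    unfolding shift_apply_eq_sum[OF d] shift_apply_eq_sum[OF lessI[of "degree p"]]
    by (simp only: coeff_smult sum_distrib_left mult.assoc)
qed

lemma shift_apply_pCons: "shift_apply (pCons a p) y i = a * y i + shift_apply p y (Suc i)"
proof -
  have "degree (pCons a p) < Suc (Suc (degree p))" "degree p < Suc (degree p)"
    using degree_pCons_le[of a p] by auto
  then show ?thesis
    by (simp only: shift_apply_eq_sum sum.lessThan_Suc_shift) (simp add: coeff_pCons_Suc)
qed

lemma shift_apply_mult: "shift_apply (p * q) y = shift_apply p (shift_apply q y)"
proof
  show "shift_apply (p * q) y i = shift_apply p (shift_apply q y) i" for i
  proof (induction p arbitrary: i rule: pCons_induct)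
    case (pCons a p)
    then show ?case
      by (simp add: mult_pCons_left shift_apply_add shift_apply_smult shift_apply_pCons)
  qed simp
qed

lemma shift_apply_commute: "shift_apply p (shift_apply q y) = shift_apply q (shift_apply p y)"
  by (metis shift_apply_mult mult.commute)

lemma shift_apply_monic_eq_0_imp_zero:
  assumes p: "degree p = d" "lead_coeff p = 1"
    and rec: "\<And>i. shift_apply p z i = 0" and init: "\<And>k. k < d \<Longrightarrow> z k = 0"
  shows "z k = 0"
proof (induction k rule: less_induct)
  case (less k)
  show ?case
  proof (cases "k < d")
    case False
    then obtain i where k: "k = i + d" by (metis add.commute le_add_diff_inverse not_less)
    have "(\<Sum>j<d. coeff p j * z (i + j)) = 0"
      by (rule sum.neutral) (use less k in auto)
    then show ?thesis using rec[of i] shift_apply_monic[OF p, of z i] k by simp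
  qed (rule init)
qed

function impulse_response :: "'a::comm_ring_1 poly \<Rightarrow> nat \<Rightarrow> 'a" where
  "impulse_response p k = (if k < degree p then (if k = degree p - 1 then 1 else 0)
     else - (\<Sum>j<degree p. coeff p j * impulse_response p (k - degree p + j)))"
  by auto
termination
  by (relation "Wellfounded.measure snd") auto

declare impulse_response.simps [simp del]

lemma impulse_response_init:
  "k < degree p \<Longrightarrow> impulse_response p k = (if k = degree p - 1 then 1 else 0)"
  by (simp add: impulse_response.simps)

lemma shift_apply_impulse_response:
  assumes "lead_coeff p = 1"
  shows "shift_apply p (impulse_response p) = (\<lambda>_. 0)"
proof
  fix i
  have "impulse_response p (i + degree p) = - (\<Sum>j<degree p. coeff p j * impulse_response p (i + j))"
    by (subst impulse_response.simps) (simp add: add.commute)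
  then show "shift_apply p (impulse_response p) i = 0"
    using shift_apply_monic[OF refl assms] by simp
qed

text \<open>A nonzero remainder \<open>r = q mod p\<close> of degree \<open>d\<close> would be detected by the impulse
  response: \<open>r(\<sigma>)\<close> applied to it takes the value \<open>lead_coeff r\<close> at index
  \<open>degree p - 1 - d\<close>.\<close>
lemma shift_apply_impulse_response_eq_0_imp_dvd:
  fixes p q :: "'a::field poly"
  assumes p: "lead_coeff p = 1" and q: "\<And>i. shift_apply q (impulse_response p) i = 0"
  shows "p dvd q"
proof -
  define r where "r = q mod p"
  have p0: "p \<noteq> 0" using p by auto
  have r: "shift_apply r (impulse_response p) i = 0" for i
  proof -
    have "q = p * (q div p) + r" unfolding r_def by simp
    then have "shift_apply q (impulse_response p) i =
        shift_apply (q div p) (shift_apply p (impulse_response p)) i + shift_apply r (impulse_response p) i"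
      by (metis shift_apply_add shift_apply_mult mult.commute)
    then show ?thesis using q[of i] by (simp add: shift_apply_impulse_response[OF p])
  qed
  have "r = 0"
  proof (rule ccontr)
    assume r0: "r \<noteq> 0"
    define d where "d = degree r"
    have d: "d < degree p" unfolding d_def r_def
      using degree_mod_less'[OF p0] r0 unfolding r_def by blast
    have "shift_apply r (impulse_response p) (degree p - 1 - d) =
        (\<Sum>j\<le>d. if j = d then coeff r d else 0)"
      unfolding shift_apply_def d_def[symmetric]
      by (intro sum.cong refl) (use d in \<open>auto simp: impulse_response_init\<close>)
    then have "lead_coeff r = 0" using r unfolding d_def by simp
    then show False using r0 by simp
  qed
  then show ?thesis unfolding r_def by (simp add: mod_eq_0_iff_dvd)
qed

lemma map_poly_of_real_mult:
  "map_poly (of_real :: real \<Rightarrow> complex) (p * q) = map_poly of_real p * map_poly of_real q"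
  by (simp add: poly_eq_iff coeff_mult coeff_map_poly)

lemma coprime_if_no_common_complex_root:
  fixes p q :: "real poly"
  assumes p: "p \<noteq> 0"
    and no_root: "\<And>z :: complex. poly (map_poly of_real p) z = 0 \<Longrightarrow> poly (map_poly of_real q) z \<noteq> 0"
  shows "coprime p q"
proof (rule ccontr)
  assume "\<not> coprime p q"
  define g where "g = gcd p q"
  have "g \<noteq> 0" using p by (simp add: g_def)
  moreover have "\<not> is_unit g" using \<open>\<not> coprime p q\<close> is_unit_gcd unfolding g_def by blast
  ultimately have "degree (map_poly (of_real :: real \<Rightarrow> complex) g) \<noteq> 0"
    by (simp add: degree_map_poly is_unit_iff_degree)
  then obtain z :: complex where z: "poly (map_poly of_real g) z = 0"
    using fundamental_theorem_of_algebra constant_degree by metis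
  obtain k k' where "p = g * k" "q = g * k'"
    unfolding g_def by (metis dvdE gcd_dvd1 gcd_dvd2)
  then have "poly (map_poly of_real p) z = 0" "poly (map_poly of_real q) z = 0"
    using z by (simp_all add: map_poly_of_real_mult)
  then show False using no_root by blast
qed

lemma assumption1_imp_coprime:
  assumes "assumption1 n a b"
  shows "coprime (monic_coeffs_poly n a) (coeffs_poly n b)"
proof (rule coprime_if_no_common_complex_root)
  show "monic_coeffs_poly n a \<noteq> 0"
    using lead_coeff_monic_coeffs_poly[of n a] by (metis leading_coeff_0_iff zero_neq_one)
qed (use assms in \<open>auto simp: assumption1_def poly_map_poly_of_real_monic_coeffs_poly
    poly_map_poly_of_real_coeffs_poly\<close>)

text \<open>The first hypothesis forces \<open>C\<close> to divide \<open>G\<close>; with \<open>G = C D\<close>, the second one forces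
  \<open>A\<close> to divide \<open>D B\<close>, hence \<open>D\<close>, which is too small unless \<open>D = 0\<close>.\<close>
lemma shift_apply_impulse_response_windows_eq_0:
  fixes A B C G :: "'a::field_gcd poly"
  assumes A: "degree A = n" "lead_coeff A = 1" and C: "degree C = n" "lead_coeff C = 1"
    and AB: "coprime A B" and G: "degree G < 2 * n"
    and GA: "\<And>i. i < n \<Longrightarrow> shift_apply G (shift_apply A (impulse_response (A * C))) i = 0"
    and GB: "\<And>i. i < n \<Longrightarrow> shift_apply G (shift_apply B (impulse_response (A * C))) i = 0"
  shows "G = 0"
proof -
  define E where "E = impulse_response (A * C)"
  have A0: "A \<noteq> 0" and C0: "C \<noteq> 0" using A C by auto
  have AC: "lead_coeff (A * C) = 1" using A C by (simp add: lead_coeff_mult)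
  have E0: "shift_apply (P * (A * C)) E = (\<lambda>_. 0)" for P
    unfolding shift_apply_mult[of P "A * C"] E_def shift_apply_impulse_response[OF AC] by auto
  have "shift_apply (G * A) E k = 0" for k
  proof (rule shift_apply_monic_eq_0_imp_zero[OF C])
    show "shift_apply C (shift_apply (G * A) E) i = 0" for i
      using fun_cong[OF E0[of G], of i] by (simp add: shift_apply_mult[symmetric] ac_simps)
  qed (use GA in \<open>simp add: E_def shift_apply_mult\<close>)
  then have "A * C dvd A * G"
    using shift_apply_impulse_response_eq_0_imp_dvd[OF AC, of "G * A"] by (simp add: E_def ac_simps)
  then obtain D where GD: "G = C * D"
    using A0 by (metis dvd_mult_cancel_left dvdE)
  have "shift_apply (G * B) E k = 0" for k
  proof (rule shift_apply_monic_eq_0_imp_zero[OF A])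
    show "shift_apply A (shift_apply (G * B) E) i = 0" for i
      using fun_cong[OF E0[of "D * B"], of i] by (simp add: shift_apply_mult[symmetric] GD ac_simps)
  qed (use GB in \<open>simp add: E_def shift_apply_mult\<close>)
  then have "C * A dvd C * (D * B)"
    using shift_apply_impulse_response_eq_0_imp_dvd[OF AC, of "G * B"] by (simp add: E_def GD ac_simps)
  then have "A dvd D"
    using C0 AB by (simp add: coprime_dvd_mult_left_iff)
  moreover have "D = 0 \<or> degree D < n"
    using G C0 GD C(1) by (cases "D = 0") (auto simp: degree_mult_eq)
  ultimately have "D = 0"
    using A(1) A0 by (metis dvd_imp_degree_le leD)
  then show ?thesis using GD by simp
qed

definition window :: "nat \<Rightarrow> (nat \<Rightarrow> 'a) \<Rightarrow> nat \<Rightarrow> 'a vec" where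
  "window n y k = vec n (\<lambda>i. y (k + i))"

lemma dim_window [simp]: "dim_vec (window n y k) = n"
  by (simp add: window_def)

lemma window_carrier [simp]: "window n y k \<in> carrier_vec n"
  by (simp add: carrier_vecI)

lemma comp_mat_mult_window:
  assumes n: "0 < n"
  shows "comp_mat n c *\<^sub>v window n y k =
    window n y (Suc k) - shift_apply (monic_coeffs_poly n c) y k \<cdot>\<^sub>v B_r n"
proof (rule eq_vecI)
  fix i assume "i < dim_vec (window n y (Suc k) - shift_apply (monic_coeffs_poly n c) y k \<cdot>\<^sub>v B_r n)"
  then have i: "i < n" by (simp add: B_r_def)
  have "shift_apply (monic_coeffs_poly n c) y k =
      y (k + n) + (\<Sum>j<n. coeff (monic_coeffs_poly n c) j * y (k + j))"
    by (rule shift_apply_monic) (simp_all add: coeff_monic_coeffs_poly)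
  then show "(comp_mat n c *\<^sub>v window n y k) $ i =
      (window n y (Suc k) - shift_apply (monic_coeffs_poly n c) y k \<cdot>\<^sub>v B_r n) $ i"
    unfolding comp_mat_mult_vec_index[OF window_carrier i] using i n
    by (simp add: window_def B_r_def cong: sum.cong_simp) (metis add_Suc_right)
qed (simp add: window_def)

lemma L_b_mult_vec:
  assumes v: "v \<in> carrier_vec n"
  shows "L_b n b *\<^sub>v v = (\<Sum>j<n. coeff (coeffs_poly n b) j * v $ j) \<cdot>\<^sub>v B_r n"
proof (rule eq_vecI)
  fix i assume "i < dim_vec ((\<Sum>j<n. coeff (coeffs_poly n b) j * v $ j) \<cdot>\<^sub>v B_r n)"
  then have i: "i < n" by (simp add: B_r_def)
  have "(L_b n b *\<^sub>v v) $ i = (\<Sum>j<n. L_b n b $$ (i, j) * v $ j)"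
    by (rule index_mult_mat_vec_sum) (auto simp: L_b_def v i)
  also have "\<dots> = (if i = n - 1 then \<Sum>j<n. coeff (coeffs_poly n b) j * v $ j else 0)"
    using i by (auto simp: L_b_def coeff_coeffs_poly)
  finally show "(L_b n b *\<^sub>v v) $ i = ((\<Sum>j<n. coeff (coeffs_poly n b) j * v $ j) \<cdot>\<^sub>v B_r n) $ i"
    using i by (simp add: B_r_def)
qed (simp add: L_b_def B_r_def)

lemma A_f_carrier [simp]: "A_f n a b c \<in> carrier_mat (2 * n) (2 * n)"
  unfolding A_f_def mult_2 by (rule four_block_carrier_mat) (simp_all add: L_b_def)

lemma A_f_mult_append:
  assumes "v \<in> carrier_vec n" "w \<in> carrier_vec n"
  shows "A_f n a b c *\<^sub>v (v @\<^sub>v w) = (comp_mat n c *\<^sub>v v) @\<^sub>v (L_b n b *\<^sub>v v + comp_mat n a *\<^sub>v w)"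
proof -
  have "A_f n a b c *\<^sub>v (v @\<^sub>v w) =
      (comp_mat n c *\<^sub>v v + 0\<^sub>m n n *\<^sub>v w) @\<^sub>v (L_b n b *\<^sub>v v + comp_mat n a *\<^sub>v w)"
    unfolding A_f_def by (rule four_block_mat_mult_vec) (use assms in \<open>auto simp: L_b_def\<close>)
  moreover have "0\<^sub>m n n *\<^sub>v w = 0\<^sub>v n"
    by (rule eq_vecI) (use assms in \<open>auto simp: scalar_prod_def\<close>)
  ultimately show ?thesis
    using assms by (simp add: mult_mat_vec_carrier[OF comp_mat_carrier])
qed

lemma A_f_mult_windows:
  assumes n: "0 < n"
    and h: "shift_apply (monic_coeffs_poly n c) h k = 0"
    and g: "shift_apply (monic_coeffs_poly n a) g k = shift_apply (coeffs_poly n b) h k"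
  shows "A_f n a b c *\<^sub>v (window n h k @\<^sub>v window n g k) = window n h (Suc k) @\<^sub>v window n g (Suc k)"
proof -
  have "L_b n b *\<^sub>v window n h k = shift_apply (coeffs_poly n b) h k \<cdot>\<^sub>v B_r n"
    unfolding L_b_mult_vec[OF window_carrier] shift_apply_eq_sum[OF degree_coeffs_poly_less[OF n]]
    by (simp add: window_def)
  then show ?thesis
    unfolding A_f_mult_append[OF window_carrier window_carrier] comp_mat_mult_window[OF n] h g
    by (intro arg_cong2[where f = append_vec] eq_vecI) (auto simp: window_def B_r_def)
qed

lemma pow_A_f_mult_windows:
  assumes n: "0 < n"
    and h: "\<And>k. shift_apply (monic_coeffs_poly n c) h k = 0"
    and g: "\<And>k. shift_apply (monic_coeffs_poly n a) g k = shift_apply (coeffs_poly n b) h k"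
  shows "A_f n a b c ^\<^sub>m j *\<^sub>v (window n h 0 @\<^sub>v window n g 0) = window n h j @\<^sub>v window n g j"
proof (induction j)
  case 0
  show ?case
    using one_mult_mat_vec[OF append_carrier_vec[OF window_carrier window_carrier, of n h 0 n g 0]]
      carrier_matD(1)[OF A_f_carrier, of n a b c] by (simp add: mult_2)
next
  case (Suc j)
  have "A_f n a b c ^\<^sub>m Suc j *\<^sub>v (window n h 0 @\<^sub>v window n g 0) =
      A_f n a b c *\<^sub>v (A_f n a b c ^\<^sub>m j *\<^sub>v (window n h 0 @\<^sub>v window n g 0))"
    unfolding pow_mat_Suc_left[OF A_f_carrier]
  proof (rule assoc_mult_mat_vec[OF A_f_carrier pow_carrier_mat[OF A_f_carrier]])
    show "window n h 0 @\<^sub>v window n g 0 \<in> carrier_vec (2 * n)"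
      using append_carrier_vec[OF window_carrier window_carrier] by (simp add: mult_2)
  qed
  then show ?case
    unfolding Suc.IH using A_f_mult_windows[OF n h g] by simp
qed

lemma impulse_response_windows_init:
  fixes A B C :: "'a::idom poly"
  assumes A: "degree A = n" "lead_coeff A = 1" and C: "degree C = n" "lead_coeff C = 1"
    and B: "degree B < n" and i: "i < n"
  shows "shift_apply A (impulse_response (A * C)) i = (if i = n - 1 then 1 else 0)"
    and "shift_apply B (impulse_response (A * C)) i = 0"
proof -
  define E where "E = impulse_response (A * C)"
  have "degree (A * C) = 2 * n"
    using A C by (subst degree_mult_eq) auto
  then have E: "E k = (if k = 2 * n - 1 then 1 else 0)" if "k < 2 * n" for k
    using impulse_response_init[of k "A * C"] that by (simp add: E_def)
  have "shift_apply A E i = E (i + n) + (\<Sum>j<n. coeff A j * E (i + j))"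
    by (rule shift_apply_monic[OF A])
  also have "(\<Sum>j<n. coeff A j * E (i + j)) = 0"
    by (rule sum.neutral) (use i E in auto)
  also have "E (i + n) = (if i = n - 1 then 1 else 0)"
    using i E[of "i + n"] by auto
  finally show "shift_apply A (impulse_response (A * C)) i = (if i = n - 1 then 1 else 0)"
    by (simp add: E_def)
  have "shift_apply B E i = (\<Sum>j<n. coeff B j * E (i + j))"
    by (rule shift_apply_eq_sum[OF B])
  also have "\<dots> = 0"
    by (rule sum.neutral) (use i E in auto)
  finally show "shift_apply B (impulse_response (A * C)) i = 0"
    by (simp add: E_def)
qed

text \<open>A kernel vector \<open>v\<close> yields the polynomial \<open>G = \<Sum> v\<^sub>j x\<^sup>j\<close>, and \<open>G(\<sigma>)\<close> annihilates
  the first \<open>n\<close> terms of both \<open>h\<close> and \<open>g\<close>.\<close>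
lemma det_windows_mat_nonzero:
  fixes A B C :: "'a::field_gcd poly"
  assumes n: "0 < n" and A: "degree A = n" "lead_coeff A = 1" and C: "degree C = n" "lead_coeff C = 1"
    and AB: "coprime A B"
  defines "h \<equiv> shift_apply A (impulse_response (A * C))"
    and "g \<equiv> shift_apply B (impulse_response (A * C))"
  shows "det (mat (2 * n) (2 * n) (\<lambda>(i, j). (window n h j @\<^sub>v window n g j) $ i)) \<noteq> 0"
    (is "det ?K \<noteq> 0")
proof
  have K: "?K \<in> carrier_mat (2 * n) (2 * n)" by simp
  assume "det ?K = 0"
  then obtain v where v: "v \<in> carrier_vec (2 * n)" "v \<noteq> 0\<^sub>v (2 * n)" "?K *\<^sub>v v = 0\<^sub>v (2 * n)"
    using det_0_iff_vec_prod_zero_field[OF K] by blast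
  define G where "G = (\<Sum>j<2 * n. monom (v $ j) j)"
  have coeff_G: "coeff G j = (if j < 2 * n then v $ j else 0)" for j
    by (simp add: G_def coeff_sum coeff_monom)
  have "degree G \<le> 2 * n - 1"
    by (rule degree_le) (auto simp: coeff_G)
  then have deg_G: "degree G < 2 * n" using n by simp
  have G_window: "shift_apply G y i = (\<Sum>j<2 * n. v $ j * window n y j $ i)" if "i < n" for y i
    using that by (simp add: shift_apply_eq_sum[OF deg_G] coeff_G window_def add.commute)
  have Kv: "(\<Sum>j<2 * n. v $ j * (window n h j @\<^sub>v window n g j) $ i) = 0" if "i < 2 * n" for i
  proof -
    have "(?K *\<^sub>v v) $ i = 0" using v(3) that by simp
    then have "(\<Sum>j<2 * n. ?K $$ (i, j) * v $ j) = 0"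
      by (simp only: index_mult_mat_vec_sum[OF K v(1) that])
    then show ?thesis using that by (simp add: mult.commute cong: sum.cong_simp)
  qed
  have "G = 0"
  proof (rule shift_apply_impulse_response_windows_eq_0[OF A C AB deg_G])
    fix i assume i: "i < n"
    show "shift_apply G (shift_apply A (impulse_response (A * C))) i = 0"
      using Kv[of i] i by (simp add: G_window h_def[symmetric])
    show "shift_apply G (shift_apply B (impulse_response (A * C))) i = 0"
      using Kv[of "n + i"] i by (simp add: G_window g_def[symmetric])
  qed
  then have "v $ i = 0" if "i < 2 * n" for i
    using coeff_G[of i] that by simp
  then have "v = 0\<^sub>v (2 * n)"
    using v(1) by (intro eq_vecI) auto
  with v(2) show False ..
qed

lemma reachable_A_f:
  assumes n: "0 < n" and AB: "coprime (monic_coeffs_poly n a) (coeffs_poly n b)"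
  shows "reachable (2 * n) (A_f n a b c) (B_f n)"
proof -
  define A B C where "A = monic_coeffs_poly n a" and "B = coeffs_poly n b" and "C = monic_coeffs_poly n c"
  define E where "E = impulse_response (A * C)"
  define h g where "h = shift_apply A E" and "g = shift_apply B E"
  have A: "degree A = n" "lead_coeff A = 1" and C: "degree C = n" "lead_coeff C = 1"
    and B: "degree B < n"
    using n by (simp_all add: A_def B_def C_def degree_coeffs_poly_less coeff_monic_coeffs_poly)
  have h_rec: "shift_apply C h k = 0" for k
  proof -
    have "shift_apply C h = shift_apply (A * C) E"
      unfolding h_def shift_apply_mult[symmetric] by (simp add: mult.commute)
    then show ?thesis
      using lead_coeff_mult[of A C] A C by (simp add: E_def shift_apply_impulse_response)
  qed
  have g_rec: "shift_apply A g k = shift_apply B h k" for k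
    unfolding g_def h_def by (rule fun_cong[OF shift_apply_commute])
  have B_f: "B_f n = window n h 0 @\<^sub>v window n g 0"
    using impulse_response_windows_init[OF A C B]
    by (intro eq_vecI) (auto simp: B_f_def window_def h_def g_def E_def)
  have "mat (2 * n) (2 * n) (\<lambda>(i, j). ((A_f n a b c ^\<^sub>m j) *\<^sub>v B_f n) $ i) =
      mat (2 * n) (2 * n) (\<lambda>(i, j). (window n h j @\<^sub>v window n g j) $ i)"
    unfolding B_f using pow_A_f_mult_windows[OF n] h_rec g_rec by (simp add: A_def B_def C_def)
  moreover have "det (mat (2 * n) (2 * n) (\<lambda>(i, j). (window n h j @\<^sub>v window n g j) $ i)) \<noteq> 0"
    unfolding h_def g_def E_def using det_windows_mat_nonzero[OF n A C] AB by (simp add: A_def B_def)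
  ultimately show ?thesis
    unfolding reachable_def by (metis vec_space.low_rank_det_zero mat_carrier)
qed

section \<open>The filter equations\<close>

lemma B_obs_eq: "B_obs n b = vec n (coeff (coeffs_poly n b))"
  by (rule eq_vecI) (simp_all add: B_obs_def coeff_coeffs_poly)

lemma C_obs_scalar_prod:
  assumes "v \<in> carrier_vec n" "0 < n"
  shows "C_obs n \<bullet> v = v $ (n - 1)"
proof -
  have "C_obs n \<bullet> v = (\<Sum>j<n. (if j = n - 1 then 1 else 0) * v $ j)"
    using assms by (simp add: scalar_prod_def C_obs_def atLeast0LessThan)
  also have "\<dots> = (\<Sum>j<n. if j = n - 1 then v $ j else 0)"
    by (intro sum.cong) auto
  also have "\<dots> = v $ (n - 1)"
    using assms by simp
  finally show ?thesis .
qed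

lemma transpose_comp_mat_change:
  assumes v: "v \<in> carrier_vec n"
  shows "transpose_mat (comp_mat n a) *\<^sub>v v =
    transpose_mat (comp_mat n c) *\<^sub>v v + v $ (n - 1) \<cdot>\<^sub>v vec n (coeff (coeffs_poly n (\<lambda>k. c k - a k)))"
    (is "_ = ?Atc *\<^sub>v v + v $ (n - 1) \<cdot>\<^sub>v vec n (coeff ?d)")
proof (rule eq_vecI)
  fix i assume "i < dim_vec (?Atc *\<^sub>v v + v $ (n - 1) \<cdot>\<^sub>v vec n (coeff ?d))"
  then have i: "i < n" by simp
  have "(transpose_mat (comp_mat n a) *\<^sub>v v) $ i =
      (if i = 0 then 0 else v $ (i - 1)) - coeff (monic_coeffs_poly n a) i * v $ (n - 1)"
    by (rule transpose_comp_mat_mult_vec_index[OF v i])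
  also have "\<dots> = (if i = 0 then 0 else v $ (i - 1)) - coeff (monic_coeffs_poly n c) i * v $ (n - 1)
      + v $ (n - 1) * coeff ?d i"
    using i by (simp add: coeff_monic_coeffs_poly coeff_coeffs_poly algebra_simps)
  also have "\<dots> = (?Atc *\<^sub>v v) $ i + v $ (n - 1) * coeff ?d i"
    by (simp only: transpose_comp_mat_mult_vec_index[OF v i])
  also have "\<dots> = (?Atc *\<^sub>v v + v $ (n - 1) \<cdot>\<^sub>v vec n (coeff ?d)) $ i"
    using i by simp
  finally show "(transpose_mat (comp_mat n a) *\<^sub>v v) $ i =
      (?Atc *\<^sub>v v + v $ (n - 1) \<cdot>\<^sub>v vec n (coeff ?d)) $ i" .
qed simp

text \<open>The Bezoutians intertwine \<open>A\<^sub>r\<close> with \<open>A\<^sub>r\<^sup>T\<close> and map \<open>B\<^sub>r\<close> to the coefficient vectors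
  of \<open>b\<close> and \<open>c - a\<close>; these are exactly the terms by which \<open>A\<^sub>a\<^sup>T\<close> and \<open>B\<close> differ from \<open>A\<^sub>r\<^sup>T\<close>
  and \<open>0\<close>.\<close>
lemma bezout_filter_difference:
  fixes a b c :: "nat \<Rightarrow> real"
  assumes n: "0 < n" and x: "x \<in> carrier_vec n" and \<zeta>: "\<zeta> \<in> carrier_vec n" and \<mu>: "\<mu> \<in> carrier_vec n"
  defines "Pb \<equiv> bezout_mat n (monic_coeffs_poly n c) (coeffs_poly n b)"
    and "Pd \<equiv> bezout_mat n (monic_coeffs_poly n c) (coeffs_poly n (\<lambda>k. c k - a k))"
  shows "(A_obs n a *\<^sub>v x + u \<cdot>\<^sub>v B_obs n b)
      - Pb *\<^sub>v (comp_mat n c *\<^sub>v \<zeta> + u \<cdot>\<^sub>v B_r n)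
      - Pd *\<^sub>v (comp_mat n c *\<^sub>v \<mu> + (C_obs n \<bullet> x) \<cdot>\<^sub>v B_r n)
    = transpose_mat (comp_mat n c) *\<^sub>v (x - Pb *\<^sub>v \<zeta> - Pd *\<^sub>v \<mu>)"
proof -
  let ?At = "transpose_mat (comp_mat n c)"
  let ?\<beta>b = "vec n (coeff (coeffs_poly n b))" and ?\<beta>d = "vec n (coeff (coeffs_poly n (\<lambda>k. c k - a k)))"
  have Pb: "Pb \<in> carrier_mat n n" and Pd: "Pd \<in> carrier_mat n n" by (simp_all add: Pb_def Pd_def)
  have deg: "degree (coeffs_poly n b) < n" "degree (coeffs_poly n (\<lambda>k. c k - a k)) < n"
    using n by (simp_all add: degree_coeffs_poly_less)
  have "Pb *\<^sub>v (comp_mat n c *\<^sub>v \<zeta> + u \<cdot>\<^sub>v B_r n) = ?At *\<^sub>v (Pb *\<^sub>v \<zeta>) + u \<cdot>\<^sub>v ?\<beta>b"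
    unfolding Pb_def by (rule bezout_mat_filter[OF n deg(1) \<zeta>])
  moreover have "Pd *\<^sub>v (comp_mat n c *\<^sub>v \<mu> + (C_obs n \<bullet> x) \<cdot>\<^sub>v B_r n) =
      ?At *\<^sub>v (Pd *\<^sub>v \<mu>) + x $ (n - 1) \<cdot>\<^sub>v ?\<beta>d"
    unfolding Pd_def C_obs_scalar_prod[OF x n] by (rule bezout_mat_filter[OF n deg(2) \<mu>])
  moreover have "A_obs n a *\<^sub>v x = ?At *\<^sub>v x + x $ (n - 1) \<cdot>\<^sub>v ?\<beta>d"
    unfolding A_obs_eq_transpose_comp_mat by (rule transpose_comp_mat_change[OF x])
  moreover have "?At *\<^sub>v (x - Pb *\<^sub>v \<zeta> - Pd *\<^sub>v \<mu>) =
      ?At *\<^sub>v x - ?At *\<^sub>v (Pb *\<^sub>v \<zeta>) - ?At *\<^sub>v (Pd *\<^sub>v \<mu>)"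
    using x \<zeta> \<mu> Pb Pd by (simp add: mult_minus_distrib_mat_vec[of _ n n] mult_mat_vec_carrier)
  ultimately show ?thesis
    unfolding B_obs_eq using x \<zeta> \<mu> Pb Pd by (intro eq_vecI) (auto simp: mult_mat_vec_carrier)
qed

lemma filter_state_decomposition:
  fixes a b c :: "nat \<Rightarrow> real" and u :: "real \<Rightarrow> real" and x \<zeta> \<mu> :: "real \<Rightarrow> real vec"
  assumes n: "0 < n"
    and plant: "is_solution n x (\<lambda>s. A_obs n a *\<^sub>v x s + u s \<cdot>\<^sub>v B_obs n b) x0"
    and filt_u: "is_solution n \<zeta> (\<lambda>s. comp_mat n c *\<^sub>v \<zeta> s + u s \<cdot>\<^sub>v B_r n) (0\<^sub>v n)"
    and filt_y: "is_solution n \<mu> (\<lambda>s. comp_mat n c *\<^sub>v \<mu> s + (C_obs n \<bullet> x s) \<cdot>\<^sub>v B_r n) (0\<^sub>v n)"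
    and t: "0 \<le> t"
  defines "Pb \<equiv> bezout_mat n (monic_coeffs_poly n c) (coeffs_poly n b)"
    and "Pd \<equiv> bezout_mat n (monic_coeffs_poly n c) (coeffs_poly n (\<lambda>k. c k - a k))"
  shows "x t = mat_exp (transpose_mat (comp_mat n c)) t *\<^sub>v x0 + Pb *\<^sub>v \<zeta> t + Pd *\<^sub>v \<mu> t"
proof -
  have x: "x s \<in> carrier_vec n" and \<zeta>: "\<zeta> s \<in> carrier_vec n" and \<mu>: "\<mu> s \<in> carrier_vec n" for s
    using is_solutionD(1) plant filt_u filt_y by metis+
  have x0: "x0 \<in> carrier_vec n" using x is_solutionD(2)[OF plant] by metis
  have Pb: "Pb \<in> carrier_mat n n" and Pd: "Pd \<in> carrier_mat n n" by (simp_all add: Pb_def Pd_def)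
  define \<xi> where "\<xi> s = x s - Pb *\<^sub>v \<zeta> s - Pd *\<^sub>v \<mu> s" for s
  have "is_solution n \<xi>
      (\<lambda>s. (A_obs n a *\<^sub>v x s + u s \<cdot>\<^sub>v B_obs n b)
         - Pb *\<^sub>v (comp_mat n c *\<^sub>v \<zeta> s + u s \<cdot>\<^sub>v B_r n)
         - Pd *\<^sub>v (comp_mat n c *\<^sub>v \<mu> s + (C_obs n \<bullet> x s) \<cdot>\<^sub>v B_r n))
      (x0 - Pb *\<^sub>v 0\<^sub>v n - Pd *\<^sub>v 0\<^sub>v n)"
    unfolding \<xi>_def
    by (intro is_solution_diff is_solution_mult_mat[OF _ Pb] is_solution_mult_mat[OF _ Pd]
        plant filt_u filt_y filter_rhs_carrier[OF \<zeta>] filter_rhs_carrier[OF \<mu>]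
        mult_mat_vec_carrier[OF Pb filter_rhs_carrier[OF \<zeta>]]
        mult_mat_vec_carrier[OF Pd filter_rhs_carrier[OF \<mu>]])
  moreover have "x0 - Pb *\<^sub>v 0\<^sub>v n - Pd *\<^sub>v 0\<^sub>v n = x0"
    using x0 Pb Pd by auto
  ultimately have "is_solution n \<xi> (\<lambda>s. transpose_mat (comp_mat n c) *\<^sub>v \<xi> s) x0"
    unfolding \<xi>_def Pb_def Pd_def bezout_filter_difference[OF n x \<zeta> \<mu>] by simp
  then have "\<xi> t = mat_exp (transpose_mat (comp_mat n c)) t *\<^sub>v x0"
    using t by (intro is_solution_linear_eq_mat_exp) simp_all
  moreover have "x t = \<xi> t + Pb *\<^sub>v \<zeta> t + Pd *\<^sub>v \<mu> t"
    unfolding \<xi>_def using x \<zeta> \<mu> Pb Pd by (intro eq_vecI) auto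
  ultimately show ?thesis by simp
qed

lemma comp_mat_change:
  assumes v: "v \<in> carrier_vec n"
  shows "comp_mat n a *\<^sub>v v =
    comp_mat n c *\<^sub>v v + (\<Sum>j<n. coeff (coeffs_poly n (\<lambda>k. c k - a k)) j * v $ j) \<cdot>\<^sub>v B_r n"
proof (rule eq_vecI)
  fix i assume "i < dim_vec (comp_mat n c *\<^sub>v v +
      (\<Sum>j<n. coeff (coeffs_poly n (\<lambda>k. c k - a k)) j * v $ j) \<cdot>\<^sub>v B_r n)"
  then have i: "i < n" by simp
  have "(\<Sum>j<n. coeff (coeffs_poly n (\<lambda>k. c k - a k)) j * v $ j) =
      (\<Sum>j<n. coeff (monic_coeffs_poly n c) j * v $ j) - (\<Sum>j<n. coeff (monic_coeffs_poly n a) j * v $ j)"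
    by (simp add: coeff_coeffs_poly coeff_monic_coeffs_poly sum_subtractf[symmetric] left_diff_distrib
        cong: sum.cong_simp)
  then have "(comp_mat n a *\<^sub>v v) $ i = (comp_mat n c *\<^sub>v v) $ i
      + (if i = n - 1 then \<Sum>j<n. coeff (coeffs_poly n (\<lambda>k. c k - a k)) j * v $ j else 0)"
    unfolding comp_mat_mult_vec_index[OF v i] by simp
  then show "(comp_mat n a *\<^sub>v v) $ i = (comp_mat n c *\<^sub>v v +
      (\<Sum>j<n. coeff (coeffs_poly n (\<lambda>k. c k - a k)) j * v $ j) \<cdot>\<^sub>v B_r n) $ i"
    using i by (simp add: B_r_def)
qed simp

lemma G_f_mult_vec:
  assumes v: "v \<in> carrier_vec n" and n: "0 < n"
  shows "G_f n *\<^sub>v v = 0\<^sub>v n @\<^sub>v (v $ (n - 1) \<cdot>\<^sub>v B_r n)"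
proof (rule eq_vecI)
  fix i assume "i < dim_vec (0\<^sub>v n @\<^sub>v (v $ (n - 1) \<cdot>\<^sub>v B_r n))"
  then have i: "i < 2 * n" by simp
  have "(G_f n *\<^sub>v v) $ i = (\<Sum>j<n. G_f n $$ (i, j) * v $ j)"
    by (rule index_mult_mat_vec_sum) (auto simp: G_f_def v i)
  also have "\<dots> = (\<Sum>j<n. if i = 2 * n - 1 \<and> j = n - 1 then v $ j else 0)"
    using i by (intro sum.cong) (auto simp: G_f_def)
  also have "\<dots> = (0\<^sub>v n @\<^sub>v (v $ (n - 1) \<cdot>\<^sub>v B_r n)) $ i"
    using i n by (cases "i = 2 * n - 1") (auto simp: B_r_def)
  finally show "(G_f n *\<^sub>v v) $ i = (0\<^sub>v n @\<^sub>v (v $ (n - 1) \<cdot>\<^sub>v B_r n)) $ i" .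
qed (simp add: G_f_def)

lemma A_f_filter_rhs:
  assumes n: "0 < n" and \<zeta>: "\<zeta> \<in> carrier_vec n" and \<mu>: "\<mu> \<in> carrier_vec n" and \<eta>: "\<eta> \<in> carrier_vec n"
    and y: "y = \<eta> $ (n - 1) + (\<Sum>j<n. coeff (coeffs_poly n b) j * \<zeta> $ j)
      + (\<Sum>j<n. coeff (coeffs_poly n (\<lambda>k. c k - a k)) j * \<mu> $ j)"
  shows "A_f n a b c *\<^sub>v (\<zeta> @\<^sub>v \<mu>) + u \<cdot>\<^sub>v B_f n + G_f n *\<^sub>v \<eta> =
    (comp_mat n c *\<^sub>v \<zeta> + u \<cdot>\<^sub>v B_r n) @\<^sub>v (comp_mat n c *\<^sub>v \<mu> + y \<cdot>\<^sub>v B_r n)"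
proof -
  let ?sb = "\<Sum>j<n. coeff (coeffs_poly n b) j * \<zeta> $ j"
    and ?sd = "\<Sum>j<n. coeff (coeffs_poly n (\<lambda>k. c k - a k)) j * \<mu> $ j"
  have "A_f n a b c *\<^sub>v (\<zeta> @\<^sub>v \<mu>) =
      (comp_mat n c *\<^sub>v \<zeta>) @\<^sub>v (?sb \<cdot>\<^sub>v B_r n + (comp_mat n c *\<^sub>v \<mu> + ?sd \<cdot>\<^sub>v B_r n))"
    unfolding A_f_mult_append[OF \<zeta> \<mu>] L_b_mult_vec[OF \<zeta>] comp_mat_change[OF \<mu>, of a c] ..
  moreover have "u \<cdot>\<^sub>v B_f n = (u \<cdot>\<^sub>v B_r n) @\<^sub>v 0\<^sub>v n"
    by (rule eq_vecI) (auto simp: B_f_def B_r_def)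
  moreover have "G_f n *\<^sub>v \<eta> = 0\<^sub>v n @\<^sub>v (\<eta> $ (n - 1) \<cdot>\<^sub>v B_r n)"
    by (rule G_f_mult_vec[OF \<eta> n])
  ultimately show ?thesis
    using \<zeta> \<mu> by (intro eq_vecI) (auto simp: y algebra_simps B_r_def)
qed

lemma plant_output_decomposition:
  fixes a b c :: "nat \<Rightarrow> real" and u :: "real \<Rightarrow> real" and x \<zeta> \<mu> :: "real \<Rightarrow> real vec"
  assumes n: "0 < n"
    and plant: "is_solution n x (\<lambda>s. A_obs n a *\<^sub>v x s + u s \<cdot>\<^sub>v B_obs n b) x0"
    and filt_u: "is_solution n \<zeta> (\<lambda>s. comp_mat n c *\<^sub>v \<zeta> s + u s \<cdot>\<^sub>v B_r n) (0\<^sub>v n)"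
    and filt_y: "is_solution n \<mu> (\<lambda>s. comp_mat n c *\<^sub>v \<mu> s + (C_obs n \<bullet> x s) \<cdot>\<^sub>v B_r n) (0\<^sub>v n)"
    and t: "0 \<le> t"
  shows "C_obs n \<bullet> x t = (mat_exp (transpose_mat (comp_mat n c)) t *\<^sub>v x0) $ (n - 1)
    + (\<Sum>j<n. coeff (coeffs_poly n b) j * \<zeta> t $ j)
    + (\<Sum>j<n. coeff (coeffs_poly n (\<lambda>k. c k - a k)) j * \<mu> t $ j)"
proof -
  let ?\<eta> = "mat_exp (transpose_mat (comp_mat n c)) t *\<^sub>v x0"
    and ?Pb = "bezout_mat n (monic_coeffs_poly n c) (coeffs_poly n b)"
    and ?Pd = "bezout_mat n (monic_coeffs_poly n c) (coeffs_poly n (\<lambda>k. c k - a k))"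
  have x: "x t \<in> carrier_vec n" and \<zeta>: "\<zeta> t \<in> carrier_vec n" and \<mu>: "\<mu> t \<in> carrier_vec n"
    using is_solutionD(1) plant filt_u filt_y by metis+
  have "C_obs n \<bullet> x t = x t $ (n - 1)"
    by (rule C_obs_scalar_prod[OF x n])
  also have "\<dots> = (?\<eta> + ?Pb *\<^sub>v \<zeta> t + ?Pd *\<^sub>v \<mu> t) $ (n - 1)"
    by (simp only: filter_state_decomposition[OF n plant filt_u filt_y t])
  also have "(?\<eta> + ?Pb *\<^sub>v \<zeta> t + ?Pd *\<^sub>v \<mu> t) $ (n - 1) =
      ?\<eta> $ (n - 1) + (?Pb *\<^sub>v \<zeta> t) $ (n - 1) + (?Pd *\<^sub>v \<mu> t) $ (n - 1)"
    using n by simp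
  also have "(?Pb *\<^sub>v \<zeta> t) $ (n - 1) = (\<Sum>j<n. coeff (coeffs_poly n b) j * \<zeta> t $ j)"
    using n by (intro bezout_mat_mult_vec_last[OF _ _ _ \<zeta>]) (simp_all add: degree_coeffs_poly_less
        coeff_monic_coeffs_poly)
  also have "(?Pd *\<^sub>v \<mu> t) $ (n - 1) = (\<Sum>j<n. coeff (coeffs_poly n (\<lambda>k. c k - a k)) j * \<mu> t $ j)"
    using n by (intro bezout_mat_mult_vec_last[OF _ _ _ \<mu>]) (simp_all add: degree_coeffs_poly_less
        coeff_monic_coeffs_poly)
  finally show ?thesis .
qed

lemma filter_state_is_solution:
  fixes a b c :: "nat \<Rightarrow> real" and u :: "real \<Rightarrow> real" and x \<zeta> \<mu> :: "real \<Rightarrow> real vec"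
  assumes n: "0 < n"
    and plant: "is_solution n x (\<lambda>s. A_obs n a *\<^sub>v x s + u s \<cdot>\<^sub>v B_obs n b) x0"
    and filt_u: "is_solution n \<zeta> (\<lambda>s. comp_mat n c *\<^sub>v \<zeta> s + u s \<cdot>\<^sub>v B_r n) (0\<^sub>v n)"
    and filt_y: "is_solution n \<mu> (\<lambda>s. comp_mat n c *\<^sub>v \<mu> s + (C_obs n \<bullet> x s) \<cdot>\<^sub>v B_r n) (0\<^sub>v n)"
  shows "is_solution (2 * n) (\<lambda>t. \<zeta> t @\<^sub>v \<mu> t)
           (\<lambda>s. A_f n a b c *\<^sub>v (\<zeta> s @\<^sub>v \<mu> s) + u s \<cdot>\<^sub>v B_f n
                 + G_f n *\<^sub>v (mat_exp (transpose_mat (comp_mat n c)) s *\<^sub>v x0))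
           (0\<^sub>v (2 * n))"
proof -
  have \<zeta>: "\<zeta> s \<in> carrier_vec n" and \<mu>: "\<mu> s \<in> carrier_vec n" for s
    using is_solutionD(1) filt_u filt_y by metis+
  have x0: "x0 \<in> carrier_vec n" using is_solutionD(1,2)[OF plant] by metis
  have \<eta>: "mat_exp (transpose_mat (comp_mat n c)) s *\<^sub>v x0 \<in> carrier_vec n" for s
    by (rule mult_mat_vec_carrier[OF mat_exp_carrier x0]) simp
  have "0\<^sub>v n @\<^sub>v 0\<^sub>v n = (0\<^sub>v (n + n) :: real vec)"
    by (rule eq_vecI) auto
  then have "is_solution (n + n) (\<lambda>t. \<zeta> t @\<^sub>v \<mu> t)
      (\<lambda>s. (comp_mat n c *\<^sub>v \<zeta> s + u s \<cdot>\<^sub>v B_r n) @\<^sub>v (comp_mat n c *\<^sub>v \<mu> s + (C_obs n \<bullet> x s) \<cdot>\<^sub>v B_r n))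
      (0\<^sub>v (n + n))"
    using is_solution_append[OF filt_u filt_y filter_rhs_carrier[OF \<zeta>] filter_rhs_carrier[OF \<mu>]] by simp
  then have "is_solution (n + n) (\<lambda>t. \<zeta> t @\<^sub>v \<mu> t)
      (\<lambda>s. A_f n a b c *\<^sub>v (\<zeta> s @\<^sub>v \<mu> s) + u s \<cdot>\<^sub>v B_f n
         + G_f n *\<^sub>v (mat_exp (transpose_mat (comp_mat n c)) s *\<^sub>v x0))
      (0\<^sub>v (n + n))"
  proof (rule is_solution_cong)
    fix s :: real assume "0 \<le> s"
    show "(comp_mat n c *\<^sub>v \<zeta> s + u s \<cdot>\<^sub>v B_r n) @\<^sub>v (comp_mat n c *\<^sub>v \<mu> s + (C_obs n \<bullet> x s) \<cdot>\<^sub>v B_r n) =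
        A_f n a b c *\<^sub>v (\<zeta> s @\<^sub>v \<mu> s) + u s \<cdot>\<^sub>v B_f n
         + G_f n *\<^sub>v (mat_exp (transpose_mat (comp_mat n c)) s *\<^sub>v x0)"
      by (rule A_f_filter_rhs[OF n \<zeta> \<mu> \<eta> plant_output_decomposition[OF n plant filt_u filt_y \<open>0 \<le> s\<close>],
            symmetric])
  qed
  then show ?thesis by (simp only: mult_2)
qed

theorem theorem1:
  fixes n :: nat and a b c :: "nat \<Rightarrow> real"
    and x0 :: "real vec" and u :: "real \<Rightarrow> real"
    and x \<zeta> \<mu> :: "real \<Rightarrow> real vec"
  assumes n: "n \<ge> 1"
    and A1: "assumption1 n a b"
    and x0: "x0 \<in> carrier_vec n"
    and u: "\<forall>T\<ge>0. u absolutely_integrable_on {0..T}"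
    and plant: "is_solution n x (\<lambda>s. A_obs n a *\<^sub>v x s + u s \<cdot>\<^sub>v B_obs n b) x0"
    and filt_u: "is_solution n \<zeta> (\<lambda>s. comp_mat n c *\<^sub>v \<zeta> s + u s \<cdot>\<^sub>v B_r n) (0\<^sub>v n)"
    and filt_y: "is_solution n \<mu> (\<lambda>s. comp_mat n c *\<^sub>v \<mu> s + (C_obs n \<bullet> x s) \<cdot>\<^sub>v B_r n) (0\<^sub>v n)"
  shows "is_solution (2 * n) (\<lambda>t. \<zeta> t @\<^sub>v \<mu> t)
           (\<lambda>s. A_f n a b c *\<^sub>v (\<zeta> s @\<^sub>v \<mu> s) + u s \<cdot>\<^sub>v B_f n
                 + G_f n *\<^sub>v (mat_exp (transpose_mat (comp_mat n c)) s *\<^sub>v x0))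
           (0\<^sub>v (2 * n))
         \<and> reachable (2 * n) (A_f n a b c) (B_f n)"
proof
  have n_pos: "0 < n" using n by simp
  show "is_solution (2 * n) (\<lambda>t. \<zeta> t @\<^sub>v \<mu> t)
           (\<lambda>s. A_f n a b c *\<^sub>v (\<zeta> s @\<^sub>v \<mu> s) + u s \<cdot>\<^sub>v B_f n
                 + G_f n *\<^sub>v (mat_exp (transpose_mat (comp_mat n c)) s *\<^sub>v x0))
           (0\<^sub>v (2 * n))"
    by (rule filter_state_is_solution[OF n_pos plant filt_u filt_y])
  show "reachable (2 * n) (A_f n a b c) (B_f n)"
    by (rule reachable_A_f[OF n_pos assumption1_imp_coprime[OF A1]])
qed

end
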